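(* Let $m\ge2$, let $\mathcal H_1,\dots,\mathcal H_m$ be real Hilbert spaces, $\boldsymbol{\mathcal H}=\mathcal H_1\oplus\cdots\oplus\mathcal H_m$, and let $\boldsymbol C\subset\boldsymbol{\mathcal H}$ be nonempty closed convex. For every $i$ let $\boldsymbol g_i:\boldsymbol{\mathcal H}\to\left]-\infty,+\infty\right]$ be such that for every $(x_1,\dots,x_m)$ the function $x\mapsto\boldsymbol g_i(x_1,\dots,x_{i-1},x,x_{i+1},\dots,x_m)$ is real-valued and differentiable on $\mathcal H_i$, with gradient $\nabla_i\boldsymbol g_i(x_1,\dots,x_m)$ at $x_i$, and assume $\sum_i\langle\nabla_i\boldsymbol g_i(\boldsymbol x)-\nabla_i\boldsymbol g_i(\boldsymbol y),x_i-y_i\rangle\ge0$ for all $\boldsymbol x,\boldsymbol y\in\boldsymbol{\mathcal H}$. For $i\in\{1,\dots,m\}$ and $(x_1,\dots,x_m)\in\boldsymbol{\mathcal H}$ set $\boldsymbol Q_i(x_1,\dots,x_{i-1},x_{i+1},\dots,x_m)=\{x\in\mathcal H_i:(x_1,\dots,x_{i-1},x,x_{i+1},\dots,x_m)\in\boldsymbol C\}$. Suppose there exists $(z_1,\dots,z_m)\in\boldsymbol{\mathcal H}$ with $-\big(\nabla_1\boldsymbol g_1(z_1,\dots,z_m),\dots,\nabla_m\boldsymbol g_m(z_1,\dots,z_m)\big)\in N_{\boldsymbol C}(z_1,\dots,z_m)$, and $\chi\in]0,+\infty[$ with $\sum_i\|\nabla_i\boldsymbol g_i(\boldsymbol x)-\nabla_i\boldsymbol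 g_i(\boldsymbol y)\|^2\le\chi^2\sum_i\|x_i-y_i\|^2$ for all $\boldsymbol x,\boldsymbol y$. Let $\varepsilon\in]0,1/(\chi+1)[$, $(\gamma_n)_n$ a sequence in $[\varepsilon,(1-\varepsilon)/\chi]$, $x_{i,0}\in\mathcal H_i$, and $(a_{i,n})_n,(b_{i,n})_n,(c_{i,n})_n$ absolutely summable sequences in $\mathcal H_i$. For every $n$ define $y_{i,n}=x_{i,n}-\gamma_n(\nabla_i\boldsymbol g_i(x_{1,n},\dots,x_{m,n})+a_{i,n})$, $(p_{1,n},\dots,p_{m,n})=P_{\boldsymbol C}(y_{1,n},\dots,y_{m,n})+(b_{1,n},\dots,b_{m,n})$, $q_{i,n}=p_{i,n}-\gamma_n(\nabla_i\boldsymbol g_i(p_{1,n},\dots,p_{m,n})+c_{i,n})$, $x_{i,n+1}=x_{i,n}-y_{i,n}+q_{i,n}$. Then there exists $(\overline x_1,\dots,\overline x_m)$ such that for every $i$, $\overline x_i\in\operatorname{Argmin}_{x\in\boldsymbol Q_i(\overline x_1,\dots,\overline x_{i-1},\overline x_{i+1},\dots,\overline x_m)}\boldsymbol g_i(\overline x_1,\dots,\overline x_{i-1},x,\overline x_{i+1},\dots,\overline x_m)$ (a generalized Nash equilibrium), and $x_{i,n}\rightharpoonup\overline x_i$, $p_{i,n}\rightharpoonup\overline x_i$.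
   Context: $\boldsymbol{\mathcal H}$ carries the inner product $\sum_i\langle x_i,y_i\rangle$. $P_{\boldsymbol C}$ is the metric projection onto $\boldsymbol C$ and $N_{\boldsymbol C}$ its normal cone: $N_{\boldsymbol C}\boldsymbol x=\{\boldsymbol u:\langle\langle\boldsymbol y-\boldsymbol x,\boldsymbol u\rangle\rangle\le0\ \forall\boldsymbol y\in\boldsymbol C\}$ if $\boldsymbol x\in\boldsymbol C$, empty otherwise. $\rightharpoonup$ denotes weak convergence. *)

theory Defs
  imports "HOL-Analysis.Analysis"
begin

text \<open>The Hilbert spaces H_1,...,H_m are modelled as closed linear subspaces H i of one
real Hilbert space 'a (every family of Hilbert spaces embeds isometrically into its direct sum).\<close>

definition hilbert_family :: "nat \<Rightarrow> (nat \<Rightarrow> ('a::{real_inner,complete_space}) set) \<Rightarrow> bool" where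
  "hilbert_family m H \<longleftrightarrow> (\<forall>i\<in>{1..m}. subspace (H i) \<and> closed (H i))"

definition dsum :: "nat \<Rightarrow> (nat \<Rightarrow> ('a::zero) set) \<Rightarrow> (nat \<Rightarrow> 'a) set" where
  "dsum m H = {x. (\<forall>i\<in>{1..m}. x i \<in> H i) \<and> (\<forall>i. i \<notin> {1..m} \<longrightarrow> x i = 0)}"

definition dinner :: "nat \<Rightarrow> (nat \<Rightarrow> 'a::real_inner) \<Rightarrow> (nat \<Rightarrow> 'a) \<Rightarrow> real" where
  "dinner m x y = (\<Sum>i\<in>{1..m}. inner (x i) (y i))"

definition dnorm2 :: "nat \<Rightarrow> (nat \<Rightarrow> 'a::real_normed_vector) \<Rightarrow> real" where
  "dnorm2 m x = (\<Sum>i\<in>{1..m}. (norm (x i))\<^sup>2)"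

definition dconvex :: "(nat \<Rightarrow> 'a::real_vector) set \<Rightarrow> bool" where
  "dconvex C \<longleftrightarrow> (\<forall>x\<in>C. \<forall>y\<in>C. \<forall>t::real. 0 \<le> t \<and> t \<le> 1 \<longrightarrow>
                    (\<lambda>i. (1 - t) *\<^sub>R x i + t *\<^sub>R y i) \<in> C)"

text \<open>Closedness of C in the norm topology of the direct sum (sequential closedness,
which is equivalent in a normed space).\<close>
definition dclosed :: "nat \<Rightarrow> (nat \<Rightarrow> ('a::real_normed_vector) set) \<Rightarrow> (nat \<Rightarrow> 'a) set \<Rightarrow> bool" where
  "dclosed m H C \<longleftrightarrow> (\<forall>s z. (\<forall>n. s n \<in> C) \<and> z \<in> dsum m H \<and>
        (\<lambda>n. sqrt (dnorm2 m (\<lambda>i. s n i - z i))) \<longlonglongrightarrow> 0 \<longrightarrow> z \<in> C)"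

text \<open>Metric projection onto C (the nearest point; it exists and is unique for
nonempty closed convex C).\<close>
definition dproj :: "nat \<Rightarrow> (nat \<Rightarrow> 'a::real_normed_vector) set \<Rightarrow> (nat \<Rightarrow> 'a) \<Rightarrow> (nat \<Rightarrow> 'a)" where
  "dproj m C y = (SOME p. p \<in> C \<and> (\<forall>c\<in>C. dnorm2 m (\<lambda>i. y i - p i) \<le> dnorm2 m (\<lambda>i. y i - c i)))"

definition normal_cone :: "nat \<Rightarrow> (nat \<Rightarrow> 'a::real_inner) set \<Rightarrow> (nat \<Rightarrow> 'a) \<Rightarrow> (nat \<Rightarrow> 'a) set" where
  "normal_cone m C x = (if x \<in> C then {u. \<forall>y\<in>C. dinner m (\<lambda>i. y i - x i) u \<le> 0} else {})"

definition Qset :: "nat \<Rightarrow> (nat \<Rightarrow> 'a set) \<Rightarrow> (nat \<Rightarrow> 'a) set \<Rightarrow> (nat \<Rightarrow> 'a) \<Rightarrow> 'a set" where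
  "Qset i H C x = {t \<in> H i. x(i := t) \<in> C}"

definition Argmin :: "('b \<Rightarrow> real) \<Rightarrow> 'b set \<Rightarrow> 'b set" where
  "Argmin f S = {x \<in> S. \<forall>y\<in>S. f x \<le> f y}"

definition weakly_converges :: "(nat \<Rightarrow> 'a::real_inner) \<Rightarrow> 'a \<Rightarrow> bool" where
  "weakly_converges s l \<longleftrightarrow> (\<forall>y. (\<lambda>n. inner (s n) y) \<longlonglongrightarrow> inner l y)"

end

theory Submission
  imports Defs "HOL-Library.Diagonal_Subsequence"
begin

(* The m players' strategies form the direct sum of the Hilbert spaces H i, and the
   iteration of the theorem is Tseng's inexact forward-backward-forward method for the
   variational inequality "find s in C with -B s in the normal cone of C at s", where
   B = (G 1, ..., G m) is the monotone, kappa-Lipschitz pseudo-gradient.  Its solutions are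
   generalised Nash equilibria, because testing the inequality with points that differ only in
   block i gives the first-order condition of player i, which is sufficient by monotonicity. *)

text \<open>The direct sum of the spaces H i is realised inside the type of finitely supported
  sequences in 'a, which carries the inner product sum_i inner (f i) (g i).\<close>

typedef (overloaded) 'a fsv = "{f :: nat \<Rightarrow> 'a::real_inner. finite {i. f i \<noteq> 0}}"
  morphisms vf mkv
  by (rule exI[of _ "\<lambda>_. 0"]) auto

setup_lifting type_definition_fsv

lemma finite_support_add:
  "finite {i. f i \<noteq> 0} \<Longrightarrow> finite {i. g i \<noteq> 0} \<Longrightarrow> finite {i. (f i::'a::real_vector) + g i \<noteq> 0}"
  by (rule finite_subset[of _ "{i. f i \<noteq> 0} \<union> {i. g i \<noteq> 0}"]) auto

lemma finite_support_diff:
  "finite {i. f i \<noteq> 0} \<Longrightarrow> finite {i. g i \<noteq> 0} \<Longrightarrow> finite {i. (f i::'a::real_vector) - g i \<noteq> 0}"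
  by (rule finite_subset[of _ "{i. f i \<noteq> 0} \<union> {i. g i \<noteq> 0}"]) auto

instantiation fsv :: (real_inner) ab_group_add
begin
lift_definition zero_fsv :: "'a fsv" is "\<lambda>_. 0" by simp
lift_definition plus_fsv :: "'a fsv \<Rightarrow> 'a fsv \<Rightarrow> 'a fsv" is "\<lambda>f g i. f i + g i"
  by (rule finite_support_add)
lift_definition minus_fsv :: "'a fsv \<Rightarrow> 'a fsv \<Rightarrow> 'a fsv" is "\<lambda>f g i. f i - g i"
  by (rule finite_support_diff)
lift_definition uminus_fsv :: "'a fsv \<Rightarrow> 'a fsv" is "\<lambda>f i. - f i" by simp
instance by standard (transfer; auto simp: algebra_simps fun_eq_iff)+
end

instantiation fsv :: (real_inner) real_vector
begin
lift_definition scaleR_fsv :: "real \<Rightarrow> 'a fsv \<Rightarrow> 'a fsv" is "\<lambda>c f i. c *\<^sub>R f i"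
  by (rule finite_subset[of _ "{i. f i \<noteq> 0}" for f]) auto
instance by standard (transfer; auto simp: algebra_simps fun_eq_iff)+
end

definition supp :: "'a::real_inner fsv \<Rightarrow> nat set" where "supp x = {i. vf x i \<noteq> 0}"

lemma finite_supp [simp]: "finite (supp x)"
  using vf[of x] by (simp add: supp_def)

definition fsv_inner :: "'a::real_inner fsv \<Rightarrow> 'a fsv \<Rightarrow> real" where
  "fsv_inner x y = (\<Sum>i\<in>supp x. inner (vf x i) (vf y i))"

lemma fsv_inner_superset:
  "finite A \<Longrightarrow> supp x \<subseteq> A \<Longrightarrow> fsv_inner x y = (\<Sum>i\<in>A. inner (vf x i) (vf y i))"
  unfolding fsv_inner_def by (rule sum.mono_neutral_left) (auto simp: supp_def)

lemma fsv_inner_superset2: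
  assumes "finite A" "supp y \<subseteq> A"
  shows "fsv_inner x y = (\<Sum>i\<in>A. inner (vf x i) (vf y i))"
proof -
  have "fsv_inner x y = (\<Sum>i\<in>A \<union> supp x. inner (vf x i) (vf y i))"
    by (rule fsv_inner_superset) (use assms in auto)
  also have "\<dots> = (\<Sum>i\<in>A. inner (vf x i) (vf y i))"
    using assms by (intro sum.mono_neutral_right) (auto simp: supp_def subset_iff finite_supp[unfolded supp_def], metis inner_zero_right)
  finally show ?thesis .
qed

lemma fsv_inner_commute: "fsv_inner x y = fsv_inner y x"
  using fsv_inner_superset[of "supp x \<union> supp y" x y] fsv_inner_superset[of "supp x \<union> supp y" y x]
  by (simp add: inner_commute)

lemma fsv_inner_add_left: "fsv_inner (x + y) z = fsv_inner x z + fsv_inner y z"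
  using fsv_inner_superset2[of "supp z" z] by (simp add: plus_fsv.rep_eq inner_add_left sum.distrib)

lemma fsv_inner_scale_left: "fsv_inner (r *\<^sub>R x) y = r * fsv_inner x y"
  using fsv_inner_superset2[of "supp y" y] by (simp add: scaleR_fsv.rep_eq sum_distrib_left)

lemma fsv_inner_self: "fsv_inner x x = (\<Sum>i\<in>supp x. (norm (vf x i))\<^sup>2)"
  unfolding fsv_inner_def power2_norm_eq_inner ..

lemma fsv_inner_self_eq_0: "fsv_inner x x = 0 \<longleftrightarrow> x = 0"
proof
  assume "fsv_inner x x = 0"
  then have "\<forall>i\<in>supp x. (norm (vf x i))\<^sup>2 = 0"
    unfolding fsv_inner_self by (subst (asm) sum_nonneg_eq_0_iff) auto
  then have "vf x = vf 0" by (auto simp: supp_def zero_fsv.rep_eq)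
  then show "x = 0" by (simp add: vf_inject)
qed (simp add: fsv_inner_def zero_fsv.rep_eq)

instantiation fsv :: (real_inner) real_inner
begin
definition inner_fsv :: "'a fsv \<Rightarrow> 'a fsv \<Rightarrow> real" where "inner_fsv = fsv_inner"
definition norm_fsv :: "'a fsv \<Rightarrow> real" where "norm_fsv x = sqrt (fsv_inner x x)"
definition sgn_fsv :: "'a fsv \<Rightarrow> 'a fsv" where "sgn_fsv x = x /\<^sub>R norm x"
definition dist_fsv :: "'a fsv \<Rightarrow> 'a fsv \<Rightarrow> real" where "dist_fsv x y = norm (x - y)"
definition uniformity_fsv :: "('a fsv \<times> 'a fsv) filter" where
  "uniformity_fsv = (INF e\<in>{0<..}. principal {(x, y). dist x y < e})"
definition open_fsv :: "'a fsv set \<Rightarrow> bool" where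
  "open_fsv U = (\<forall>x\<in>U. \<forall>\<^sub>F (x', y) in uniformity. x' = x \<longrightarrow> y \<in> U)"
instance
proof
  fix x y z :: "'a fsv" and r :: real
  show "inner x y = inner y x" by (simp add: inner_fsv_def fsv_inner_commute)
  show "inner (x + y) z = inner x z + inner y z" by (simp add: inner_fsv_def fsv_inner_add_left)
  show "inner (r *\<^sub>R x) y = r * inner x y" by (simp add: inner_fsv_def fsv_inner_scale_left)
  show "0 \<le> inner x x" by (simp add: inner_fsv_def fsv_inner_self sum_nonneg)
  show "inner x x = 0 \<longleftrightarrow> x = 0" by (simp add: inner_fsv_def fsv_inner_self_eq_0)
  show "norm x = sqrt (inner x x)" by (simp add: inner_fsv_def norm_fsv_def)
  show "dist x y = norm (x - y)" by (simp add: dist_fsv_def)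
  show "sgn x = x /\<^sub>R norm x" by (simp add: sgn_fsv_def)
  show "uniformity = (INF e\<in>{0<..}. principal {(x, y::'a fsv). dist x y < e})"
    unfolding uniformity_fsv_def ..
  show "open U = (\<forall>x\<in>U. \<forall>\<^sub>F (x', y) in uniformity. x' = x \<longrightarrow> y \<in> U)" for U :: "'a fsv set"
    unfolding open_fsv_def ..
qed
end

lemma norm_coordinate_le: "norm (vf Z i) \<le> norm Z"
proof (cases "i \<in> supp Z")
  case True
  have "(norm (vf Z i))\<^sup>2 \<le> (\<Sum>j\<in>supp Z. (norm (vf Z j))\<^sup>2)"
    by (rule member_le_sum) (use True in auto)
  also have "\<dots> = (norm Z)\<^sup>2" unfolding power2_norm_eq_inner[of Z] inner_fsv_def fsv_inner_self ..
  finally show ?thesis by (rule power2_le_imp_le) simp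
qed (simp add: supp_def)

text \<open>Nearest points and the Riesz representation in complete subsets of an inner product
  space.  Both rest on one principle: a function that is bounded below, continuous and
  uniformly convex in the parallelogram sense attains its infimum on a complete convex set,
  because every minimising sequence is Cauchy.\<close>

lemma minimizing_sequence_Cauchy:
  fixes C :: "'b::real_inner set" and \<phi> :: "'b \<Rightarrow> real"
  assumes conv: "convex C"
    and par: "\<And>x y. x \<in> C \<Longrightarrow> y \<in> C \<Longrightarrow>
                (norm (x - y))\<^sup>2 \<le> 2 * \<phi> x + 2 * \<phi> y - 4 * \<phi> ((1/2) *\<^sub>R (x + y))"
    and dle: "\<And>y. y \<in> C \<Longrightarrow> d \<le> \<phi> y"
    and sC: "\<And>k. s k \<in> C" and s_min: "\<And>k. \<phi> (s k) < d + inverse (real (Suc k))"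
  shows "Cauchy s"
proof (rule metric_CauchyI)
  have mid: "(1/2) *\<^sub>R (x + y) \<in> C" if "x \<in> C" "y \<in> C" for x y
    using convexD[OF conv that, of "1/2" "1/2"] by (simp add: scaleR_add_right)
  fix e :: real assume e: "e > 0"
  obtain N where N: "inverse (real (Suc N)) < e\<^sup>2 / 4"
    using reals_Archimedean[of "e\<^sup>2/4"] e by auto
  have "dist (s m) (s n) < e" if "m \<ge> N" "n \<ge> N" for m n
  proof -
    have "inverse (real (Suc m)) \<le> inverse (real (Suc N))"
      "inverse (real (Suc n)) \<le> inverse (real (Suc N))"
      using that by (simp_all add: le_imp_inverse_le)
    then have "(norm (s m - s n))\<^sup>2 < e\<^sup>2"
      using par[OF sC sC, of m n] s_min[of m] s_min[of n] dle[OF mid[OF sC sC], of m n] N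
      by linarith
    then show ?thesis using e by (simp add: dist_norm power_less_imp_less_base)
  qed
  then show "\<exists>M. \<forall>m\<ge>M. \<forall>n\<ge>M. dist (s m) (s n) < e" by blast
qed

lemma minimizer_exists:
  fixes C :: "'b::real_inner set" and \<phi> :: "'b \<Rightarrow> real"
  assumes conv: "convex C" and comp: "complete C" and ne: "C \<noteq> {}"
    and bdd: "\<And>x. x \<in> C \<Longrightarrow> L \<le> \<phi> x"
    and cont: "\<And>s x. (\<And>n. s n \<in> C) \<Longrightarrow> x \<in> C \<Longrightarrow> s \<longlonglongrightarrow> x \<Longrightarrow> (\<lambda>n. \<phi> (s n)) \<longlonglongrightarrow> \<phi> x"
    and par: "\<And>x y. x \<in> C \<Longrightarrow> y \<in> C \<Longrightarrow>
                (norm (x - y))\<^sup>2 \<le> 2 * \<phi> x + 2 * \<phi> y - 4 * \<phi> ((1/2) *\<^sub>R (x + y))"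
  shows "\<exists>x\<in>C. \<forall>y\<in>C. \<phi> x \<le> \<phi> y"
proof -
  define d where "d = Inf (\<phi> ` C)"
  have bb: "bdd_below (\<phi> ` C)" using bdd by (auto intro!: bdd_belowI)
  have dle: "d \<le> \<phi> y" if "y \<in> C" for y
    unfolding d_def using bb that by (auto intro: cInf_lower)
  have "\<exists>x\<in>C. \<phi> x < d + inverse (real (Suc k))" for k
  proof -
    have "Inf (\<phi> ` C) < d + inverse (real (Suc k))" unfolding d_def by simp
    then show ?thesis using ne bb by (subst (asm) cInf_less_iff) auto
  qed
  then obtain s where s: "\<And>k. s k \<in> C" "\<And>k. \<phi> (s k) < d + inverse (real (Suc k))"
    by metis
  obtain l where l: "l \<in> C" "s \<longlonglongrightarrow> l"
    using comp s(1) minimizing_sequence_Cauchy[OF conv par dle s] unfolding complete_def by blast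
  have "(\<lambda>n. \<phi> (s n)) \<longlonglongrightarrow> d"
  proof (rule real_tendsto_sandwich[of "\<lambda>n. d" _ _ "\<lambda>n. d + inverse (real (Suc n))"])
    show "\<forall>\<^sub>F n in sequentially. d \<le> \<phi> (s n)" using dle s(1) by auto
    show "\<forall>\<^sub>F n in sequentially. \<phi> (s n) \<le> d + inverse (real (Suc n))"
      using s(2) less_imp_le by (intro always_eventually) blast
    show "(\<lambda>n. d + inverse (real (Suc n))) \<longlonglongrightarrow> d"
      using tendsto_add[OF tendsto_const[of d] LIMSEQ_inverse_real_of_nat] by simp
  qed simp
  then have "\<phi> l = d" using LIMSEQ_unique[OF cont[OF s(1) l]] by simp
  then show ?thesis using l(1) dle by auto
qed

text \<open>The parallelogram law, which provides the uniform convexity of the squared norm.\<close>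

lemma parallelogram: "(norm (x - y))\<^sup>2 = 2 * (norm x)\<^sup>2 + 2 * (norm y)\<^sup>2 - (norm (x + y))\<^sup>2"
  for x y :: "'b::real_inner"
  by (simp add: power2_norm_eq_inner inner_simps inner_commute)

lemma norm_half_sq: "(norm ((1/2) *\<^sub>R (x::'b::real_inner)))\<^sup>2 = (norm x)\<^sup>2 / 4"
  by (simp add: power2_eq_square)

lemma nearest_point_exists:
  fixes C :: "'b::real_inner set"
  assumes "convex C" "complete C" "C \<noteq> {}"
  shows "\<exists>p\<in>C. \<forall>c\<in>C. dist y p \<le> dist y c"
proof -
  have "\<exists>x\<in>C. \<forall>c\<in>C. (\<lambda>c. (norm (y - c))\<^sup>2) x \<le> (\<lambda>c. (norm (y - c))\<^sup>2) c"
  proof (rule minimizer_exists[where L = 0])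
    show "(\<lambda>n. (norm (y - s n))\<^sup>2) \<longlonglongrightarrow> (norm (y - x))\<^sup>2" if "s \<longlonglongrightarrow> x" for s x
      by (intro tendsto_intros that)
    show "(norm (x - z))\<^sup>2 \<le> 2 * (norm (y - x))\<^sup>2 + 2 * (norm (y - z))\<^sup>2
          - 4 * (norm (y - (1/2) *\<^sub>R (x + z)))\<^sup>2" for x z
    proof -
      have "y - (1/2) *\<^sub>R (x + z) = (1/2) *\<^sub>R ((y - x) + (y - z))"
        by (simp add: algebra_simps flip: scaleR_2)
      then have "(norm (y - (1/2) *\<^sub>R (x + z)))\<^sup>2 = (norm ((y - x) + (y - z)))\<^sup>2 / 4"
        using norm_half_sq by metis
      moreover have "x - z = (y - z) - (y - x)" by simp
      ultimately show ?thesis using parallelogram[of "y - z" "y - x"] by (simp add: add.commute)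
    qed
  qed (use assms in auto)
  then show ?thesis by (auto simp: dist_norm intro: power2_le_imp_le)
qed

lemma quadratic_minimizer_represents:
  fixes V :: "'b::real_inner set" and f :: "'b \<Rightarrow> real"
  assumes sub: "subspace V"
    and fadd: "\<And>u v. u \<in> V \<Longrightarrow> v \<in> V \<Longrightarrow> f (u + v) = f u + f v"
    and fscale: "\<And>u c. u \<in> V \<Longrightarrow> f (c *\<^sub>R u) = c * f u"
    and xb: "xb \<in> V" and min: "\<And>y. y \<in> V \<Longrightarrow> (norm xb)\<^sup>2 - 2 * f xb \<le> (norm y)\<^sup>2 - 2 * f y"
    and v: "v \<in> V"
  shows "inner xb v = f v"
proof -
  define a where "a = inner xb v - f v"
  define N where "N = (norm v)\<^sup>2"
  have N0: "N \<ge> 0" unfolding N_def by simp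
  have quadratic: "0 \<le> 2 * t * a + t\<^sup>2 * N" for t
  proof -
    have "xb + t *\<^sub>R v \<in> V" using sub xb v by (simp add: subspace_add subspace_scale)
    moreover have "f (xb + t *\<^sub>R v) = f xb + t * f v"
      using fadd fscale xb v sub by (simp add: subspace_scale)
    moreover have "(norm (xb + t *\<^sub>R v))\<^sup>2 = (norm xb)\<^sup>2 + 2 * t * inner xb v + t\<^sup>2 * (norm v)\<^sup>2"
      unfolding power2_norm_eq_inner by (simp add: inner_simps inner_commute algebra_simps power2_eq_square)
    ultimately show ?thesis using min[of "xb + t *\<^sub>R v"] unfolding a_def N_def by (simp add: algebra_simps)
  qed
  define t where "t = - a / (N + 1)"
  have at: "a = - t * (N + 1)" unfolding t_def using N0 by (simp add: field_simps)
  have "0 \<le> - (t\<^sup>2 * (N + 2))"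
    using quadratic[of t] unfolding at by (simp add: algebra_simps power2_eq_square)
  then have "t = 0" using N0 by (simp add: mult_le_0_iff)
  then show ?thesis using at unfolding a_def by simp
qed

lemma riesz_representation_subspace:
  fixes V :: "'b::real_inner set" and f :: "'b \<Rightarrow> real"
  assumes sub: "subspace V" and comp: "complete V"
    and fadd: "\<And>u v. u \<in> V \<Longrightarrow> v \<in> V \<Longrightarrow> f (u + v) = f u + f v"
    and fscale: "\<And>u c. u \<in> V \<Longrightarrow> f (c *\<^sub>R u) = c * f u"
    and bd: "\<And>v. v \<in> V \<Longrightarrow> \<bar>f v\<bar> \<le> K * norm v"
  shows "\<exists>xb\<in>V. \<forall>v\<in>V. inner xb v = f v"
proof -
  define \<phi> where "\<phi> x = (norm x)\<^sup>2 - 2 * f x" for x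
  have fdiff: "f (u - v) = f u - f v" if "u \<in> V" "v \<in> V" for u v
    using fadd[OF that(1) subspace_scale[OF sub that(2), of "-1"]] fscale[OF that(2), of "-1"] by simp
  have "\<exists>x\<in>V. \<forall>y\<in>V. \<phi> x \<le> \<phi> y"
  proof (rule minimizer_exists[where L = "- K\<^sup>2"])
    show "convex V" using sub by (rule subspace_imp_convex)
    show "V \<noteq> {}" using sub subspace_0 by auto
    show "- K\<^sup>2 \<le> \<phi> x" if "x \<in> V" for x
    proof -
      have "f x \<le> K * norm x" using bd[OF that] by simp
      moreover have "0 \<le> (norm x - K)\<^sup>2" by simp
      ultimately show ?thesis unfolding \<phi>_def by (simp add: power2_eq_square algebra_simps)
    qed
    show "(\<lambda>n. \<phi> (s n)) \<longlonglongrightarrow> \<phi> x" if s: "\<And>n. s n \<in> V" "x \<in> V" "s \<longlonglongrightarrow> x" for s x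
    proof -
      have "(\<lambda>n. f (s n) - f x) \<longlonglongrightarrow> 0"
      proof (rule tendsto_0_le[where K = K and f = "\<lambda>n. s n - x"])
        show "(\<lambda>n. s n - x) \<longlonglongrightarrow> 0" using s(3) by (simp add: LIM_zero)
        show "\<forall>\<^sub>F n in sequentially. norm (f (s n) - f x) \<le> norm (s n - x) * K"
          using bd fdiff s(1,2) sub by (intro always_eventually allI)
            (metis mult.commute real_norm_def subspace_diff)
      qed
      then show ?thesis unfolding \<phi>_def by (intro tendsto_intros s(3)) (simp add: LIM_zero_iff)
    qed
    show "(norm (x - y))\<^sup>2 \<le> 2 * \<phi> x + 2 * \<phi> y - 4 * \<phi> ((1/2) *\<^sub>R (x + y))"
      if "x \<in> V" "y \<in> V" for x y
    proof -
      have "f ((1/2) *\<^sub>R (x + y)) = (1/2) * (f x + f y)"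
        using fscale fadd that sub by (simp add: subspace_add)
      then show ?thesis unfolding \<phi>_def parallelogram[of x y] norm_half_sq by simp
    qed
  qed (rule comp)
  then show ?thesis
    using quadratic_minimizer_represents[OF sub fadd fscale] unfolding \<phi>_def by blast
qed

text \<open>Metric projections onto convex sets are nonexpansive; we only need the variational
  characterisation of the two projected points.\<close>

lemma projection_nonexpansive:
  fixes P :: "'b::real_inner \<Rightarrow> 'b"
  assumes vi1: "inner (P v - P u) (u - P u) \<le> 0" and vi2: "inner (P u - P v) (v - P v) \<le> 0"
  shows "norm (P u - P v) \<le> norm (u - v)"
proof -
  define d where "d = P u - P v"
  have "inner d ((u - v) - d) \<ge> 0"
    using vi1 vi2 unfolding d_def by (simp add: inner_diff_left inner_diff_right inner_commute)
  then have "(norm d)\<^sup>2 \<le> inner d (u - v)" by (simp add: inner_diff_right power2_norm_eq_inner)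
  also have "\<dots> \<le> norm d * norm (u - v)" by (rule norm_cauchy_schwarz)
  finally have "norm d * norm d \<le> norm d * norm (u - v)" by (simp add: power2_eq_square)
  then show ?thesis unfolding d_def by (cases "norm d = 0") (auto simp: d_def)
qed

text \<open>A diagonal
  argument makes the inner products with all members of the sequence converge; the set of
  directions along which the inner products converge is a complete subspace, and on it the
  limit functional is represented by a vector (Riesz), which is the weak limit.\<close>

lemma diagonal_inner_convergent:
  fixes s :: "nat \<Rightarrow> 'b::real_inner"
  assumes bd: "\<And>n. norm (s n) \<le> K"
  shows "\<exists>r. strict_mono r \<and> (\<forall>j. convergent (\<lambda>n. inner (s (r n)) (s j)))"
proof -
  define P where "P = (\<lambda>j (r::nat\<Rightarrow>nat). convergent (\<lambda>n. inner (s (r n)) (s j)))"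
  interpret subseqs P
  proof
    fix j and \<sigma> :: "nat \<Rightarrow> nat" assume "strict_mono \<sigma>"
    define u where "u n = inner (s (\<sigma> n)) (s j)" for n
    obtain r' where r': "strict_mono r'" "monoseq (\<lambda>n. u (r' n))" using seq_monosub by blast
    have "Bseq (\<lambda>n. u (r' n))"
    proof (rule BseqI'[where K = "K * norm (s j)"])
      fix n
      have "norm (u (r' n)) \<le> norm (s (\<sigma> (r' n))) * norm (s j)"
        unfolding u_def real_norm_def by (rule Cauchy_Schwarz_ineq2)
      also have "\<dots> \<le> K * norm (s j)" using bd by (simp add: mult_right_mono)
      finally show "norm (u (r' n)) \<le> K * norm (s j)" .
    qed
    then have "convergent (\<lambda>n. u (r' n))" using r'(2) by (rule Bseq_monoseq_convergent)
    then show "\<exists>r'. strict_mono r' \<and> P j (\<sigma> \<circ> r')" using r'(1) unfolding P_def u_def by auto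
  qed
  have "P j diagseq" for j
  proof -
    have "P j (diagseq \<circ> (+) (Suc j))"
    proof (rule diagseq_holds)
      fix r :: "nat \<Rightarrow> nat" and t n assume "strict_mono r" "P n t"
      then show "P n (t \<circ> r)" unfolding P_def
        using convergent_subseq_convergent[of "\<lambda>k. inner (s (t k)) (s n)" r] by (simp add: o_def)
    qed
    then have "convergent (\<lambda>n. inner (s (diagseq (n + Suc j))) (s j))"
      unfolding P_def by (simp add: o_def add.commute)
    then show ?thesis unfolding P_def by (subst (asm) convergent_ignore_initial_segment)
  qed
  then show ?thesis using subseq_diagseq unfolding P_def by blast
qed

text \<open>For a bounded sequence t, the directions v along which inner (t n) v converges form
  a subspace, which is complete when D is (boundedness gives equicontinuity).\<close>

lemma convergence_directions_subspace:
  fixes t :: "nat \<Rightarrow> 'b::real_inner"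
  assumes subD: "subspace D"
  shows "subspace {v \<in> D. convergent (\<lambda>n. inner (t n) v)}"
  unfolding subspace_def
proof (intro conjI ballI allI)
  show "0 \<in> {v \<in> D. convergent (\<lambda>n. inner (t n) v)}"
    using subD by (simp add: subspace_0 convergent_const)
  show "x + y \<in> {v \<in> D. convergent (\<lambda>n. inner (t n) v)}"
    if "x \<in> {v \<in> D. convergent (\<lambda>n. inner (t n) v)}" "y \<in> {v \<in> D. convergent (\<lambda>n. inner (t n) v)}"
    for x y
    using that subD by (auto simp: inner_add_right subspace_add intro: convergent_add)
  show "c *\<^sub>R x \<in> {v \<in> D. convergent (\<lambda>n. inner (t n) v)}"
    if "x \<in> {v \<in> D. convergent (\<lambda>n. inner (t n) v)}" for c x
    using that subD convergent_mult[OF convergent_const[of c]] by (auto simp: subspace_scale)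
qed

lemma convergence_directions_complete:
  fixes t :: "nat \<Rightarrow> 'b::real_inner"
  assumes compD: "complete D" and bd: "\<And>n. norm (t n) \<le> K"
  shows "complete {v \<in> D. convergent (\<lambda>n. inner (t n) v)}"
  unfolding complete_def
proof (intro allI impI)
  define V where "V = {v \<in> D. convergent (\<lambda>n. inner (t n) v)}"
  have K0: "K \<ge> 0" using bd[of 0] norm_ge_zero order_trans by blast
  fix v :: "nat \<Rightarrow> 'b" assume v: "(\<forall>n. v n \<in> V) \<and> Cauchy v"
  then obtain l where l: "l \<in> D" "v \<longlonglongrightarrow> l" using compD unfolding complete_def V_def by blast
  have "Cauchy (\<lambda>n. inner (t n) l)"
  proof (rule metric_CauchyI)
    fix e :: real assume e: "e > 0"
    have "\<forall>\<^sub>F k in sequentially. dist (v k) l < e / (3 * (K + 1))"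
      using l(2) e K0 by (auto simp: tendsto_iff)
    then obtain k where k: "norm (v k - l) < e / (3 * (K + 1))"
      by (auto simp: dist_norm dest: eventually_happens)
    have "Cauchy (\<lambda>n. inner (t n) (v k))"
      using v unfolding V_def by (auto simp: Cauchy_convergent_iff)
    then obtain M where M: "\<And>m n. m \<ge> M \<Longrightarrow> n \<ge> M \<Longrightarrow>
        dist (inner (t m) (v k)) (inner (t n) (v k)) < e / 3"
      using e unfolding Cauchy_def by (meson divide_pos_pos zero_less_numeral)
    have close: "\<bar>inner (t n) (v k - l)\<bar> < e / 3" for n
    proof -
      have "\<bar>inner (t n) (v k - l)\<bar> \<le> (K + 1) * norm (v k - l)"
        using Cauchy_Schwarz_ineq2[of "t n" "v k - l"] bd[of n]
        by (smt (verit, best) mult_right_mono norm_ge_zero)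
      also have "\<dots> < (K + 1) * (e / (3 * (K + 1)))" using k K0 by (intro mult_strict_left_mono) auto
      also have "\<dots> = e / 3" using K0 by (simp add: field_simps)
      finally show ?thesis .
    qed
    have "dist (inner (t m) l) (inner (t n) l) < e" if "m \<ge> M" "n \<ge> M" for m n
    proof -
      have "inner (t m) l - inner (t n) l = (inner (t m) (v k) - inner (t n) (v k))
          - inner (t m) (v k - l) + inner (t n) (v k - l)"
        by (simp add: inner_diff_right)
      then show ?thesis using M[OF that] close[of m] close[of n] unfolding dist_real_def by linarith
    qed
    then show "\<exists>M. \<forall>m\<ge>M. \<forall>n\<ge>M. dist (inner (t m) l) (inner (t n) l) < e" by blast
  qed
  then have "l \<in> V" using l(1) unfolding V_def by (simp add: Cauchy_convergent_iff)
  then show "\<exists>l\<in>{v \<in> D. convergent (\<lambda>n. inner (t n) v)}. v \<longlonglongrightarrow> l"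
    using l(2) unfolding V_def by blast
qed

text \<open>For a bounded sequence t in a complete subspace V whose inner products with all elements
  of V converge, the limit is a bounded linear functional on V and hence represented by a
  vector of V.  Projecting arbitrary test vectors onto V then gives weak convergence.\<close>

lemma limit_functional_represented:
  fixes t :: "nat \<Rightarrow> 'b::real_inner"
  assumes subV: "subspace V" and compV: "complete V"
    and bd: "\<And>n. norm (t n) \<le> K" and conv: "\<And>v. v \<in> V \<Longrightarrow> convergent (\<lambda>n. inner (t n) v)"
  shows "\<exists>xb\<in>V. \<forall>v\<in>V. (\<lambda>n. inner (t n) v) \<longlonglongrightarrow> inner xb v"
proof -
  define f where "f v = lim (\<lambda>n. inner (t n) v)" for v
  have flim: "(\<lambda>n. inner (t n) v) \<longlonglongrightarrow> f v" if "v \<in> V" for v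
    using conv[OF that] unfolding f_def by (simp add: convergent_LIMSEQ_iff)
  have "\<exists>xb\<in>V. \<forall>v\<in>V. inner xb v = f v"
  proof (rule riesz_representation_subspace[OF subV compV, where K = K])
    show "f (u + v) = f u + f v" if "u \<in> V" "v \<in> V" for u v
    proof -
      have "(\<lambda>n. inner (t n) (u + v)) \<longlonglongrightarrow> f u + f v"
        using tendsto_add[OF flim[OF that(1)] flim[OF that(2)]] by (simp add: inner_add_right)
      then show ?thesis using flim[OF subspace_add[OF subV that]] LIMSEQ_unique by blast
    qed
    show "f (c *\<^sub>R u) = c * f u" if "u \<in> V" for u c
    proof -
      have "(\<lambda>n. inner (t n) (c *\<^sub>R u)) \<longlonglongrightarrow> c * f u"
        using tendsto_mult[OF tendsto_const[of c] flim[OF that]] by simp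
      then show ?thesis using flim[OF subspace_scale[OF subV that]] LIMSEQ_unique by blast
    qed
    show "\<bar>f v\<bar> \<le> K * norm v" if "v \<in> V" for v
    proof (rule LIMSEQ_le_const2)
      show "(\<lambda>n. \<bar>inner (t n) v\<bar>) \<longlonglongrightarrow> \<bar>f v\<bar>" by (intro tendsto_intros flim that)
      show "\<exists>N. \<forall>n\<ge>N. \<bar>inner (t n) v\<bar> \<le> K * norm v"
      proof (intro exI allI impI)
        fix n
        have "\<bar>inner (t n) v\<bar> \<le> norm (t n) * norm v" by (rule Cauchy_Schwarz_ineq2)
        also have "\<dots> \<le> K * norm v" using bd[of n] by (simp add: mult_right_mono)
        finally show "\<bar>inner (t n) v\<bar> \<le> K * norm v" .
      qed
    qed
  qed
  then show ?thesis using flim by metis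
qed

lemma weak_limit_exists:
  fixes t :: "nat \<Rightarrow> 'b::real_inner"
  assumes subV: "subspace V" and compV: "complete V" and tV: "\<And>n. t n \<in> V"
    and bd: "\<And>n. norm (t n) \<le> K" and conv: "\<And>v. v \<in> V \<Longrightarrow> convergent (\<lambda>n. inner (t n) v)"
  shows "\<exists>xb\<in>V. weakly_converges t xb"
proof -
  obtain xb where xb: "xb \<in> V" "\<And>v. v \<in> V \<Longrightarrow> (\<lambda>n. inner (t n) v) \<longlonglongrightarrow> inner xb v"
    using limit_functional_represented[OF subV compV bd conv] by blast
  have "(\<lambda>n. inner (t n) w) \<longlonglongrightarrow> inner xb w" for w
  proof -
    obtain \<pi> where \<pi>: "\<pi> \<in> V" "\<And>v. v \<in> V \<Longrightarrow> inner \<pi> v = inner w v"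
      using riesz_representation_subspace[OF subV compV, of "inner w" "norm w"]
      by (auto simp: inner_add_right Cauchy_Schwarz_ineq2)
    have "inner (t n) \<pi> = inner (t n) w" for n
      using \<pi>(2)[OF tV[of n]] by (simp add: inner_commute)
    moreover have "inner xb \<pi> = inner xb w"
      using \<pi>(2)[OF xb(1)] by (simp add: inner_commute)
    ultimately show ?thesis using xb(2)[OF \<pi>(1)] by simp
  qed
  then show ?thesis using xb(1) unfolding weakly_converges_def by blast
qed

lemma weak_sequential_compactness:
  fixes D :: "'b::real_inner set" and s :: "nat \<Rightarrow> 'b"
  assumes subD: "subspace D" and compD: "complete D" and sD: "\<And>n. s n \<in> D"
    and bd: "\<And>n. norm (s n) \<le> K"
  shows "\<exists>r l. strict_mono r \<and> l \<in> D \<and> weakly_converges (s \<circ> r) l"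
proof -
  obtain r where r: "strict_mono r" "\<And>j. convergent (\<lambda>n. inner (s (r n)) (s j))"
    using diagonal_inner_convergent[of s K] bd by blast
  define V where "V = {v \<in> D. convergent (\<lambda>n. inner ((s \<circ> r) n) v)}"
  have "\<exists>l\<in>V. weakly_converges (s \<circ> r) l"
  proof (rule weak_limit_exists[where K = K])
    show "subspace V" unfolding V_def using subD by (rule convergence_directions_subspace)
    show "complete V" unfolding V_def using compD bd by (intro convergence_directions_complete) auto
    show "(s \<circ> r) n \<in> V" for n using sD r(2) unfolding V_def by simp
  qed (use bd V_def in auto)
  then show ?thesis using r(1) unfolding V_def by blast
qed

lemma weakly_converges_shift:
  fixes s t :: "nat \<Rightarrow> 'b::real_inner"
  assumes "weakly_converges s l" "(\<lambda>n. norm (t n - s n)) \<longlonglongrightarrow> 0"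
  shows "weakly_converges t l"
  unfolding weakly_converges_def
proof
  fix w
  have "(\<lambda>n. inner (t n - s n) w) \<longlonglongrightarrow> 0"
  proof (rule tendsto_0_le[where K = "norm w" and f = "\<lambda>n. norm (t n - s n)"])
    show "\<forall>\<^sub>F n in sequentially. norm (inner (t n - s n) w) \<le> norm (norm (t n - s n)) * norm w"
      by (intro always_eventually allI) (simp add: Cauchy_Schwarz_ineq2)
  qed (rule assms(2))
  from tendsto_add[OF this assms(1)[unfolded weakly_converges_def, rule_format, of w]]
  show "(\<lambda>n. inner (t n) w) \<longlonglongrightarrow> inner l w" by (simp add: inner_diff_left)
qed

text \<open>The
  nearest point pi of the limit v satisfies inner (c - pi) (v - pi) \<le> 0 on the set, and
  passing to the limit gives norm (v - pi) = 0.\<close>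

lemma weak_limit_in_convex:
  fixes C :: "'b::real_inner set"
  assumes conv: "convex C" and comp: "complete C"
    and sC: "\<And>n. s n \<in> C" and ws: "weakly_converges s v"
  shows "v \<in> C"
proof -
  have ne: "C \<noteq> {}" using sC by blast
  obtain \<pi> where \<pi>: "\<pi> \<in> C" "\<And>c. c \<in> C \<Longrightarrow> dist v \<pi> \<le> dist v c"
    using nearest_point_exists[OF conv comp ne] by blast
  have "inner (s n - \<pi>) (v - \<pi>) \<le> 0" for n
    using any_closest_point_dot[OF conv complete_imp_closed[OF comp] \<pi>(1) sC] \<pi>(2)
    by (simp add: inner_commute)
  moreover have "(\<lambda>n. inner (s n - \<pi>) (v - \<pi>)) \<longlonglongrightarrow> inner (v - \<pi>) (v - \<pi>)"
    using tendsto_diff[OF ws[unfolded weakly_converges_def, rule_format, of "v - \<pi>"]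
        tendsto_const[of "inner \<pi> (v - \<pi>)"]]
    by (simp add: inner_diff_left)
  ultimately have "inner (v - \<pi>) (v - \<pi>) \<le> 0" by (intro LIMSEQ_le_const2) auto
  then have "v = \<pi>" using inner_ge_zero[of "v - \<pi>"] by simp
  then show ?thesis using \<pi>(1) by simp
qed

text \<open>If the distances from x n to every point of S converge, then x has at
  most one weak cluster point in S: writing inner (x n) (v1 - v2) through the distances to v1
  and v2 shows that it converges, and its limits along the two subsequences are
  inner v1 (v1 - v2) and inner v2 (v1 - v2).\<close>

lemma weak_cluster_point_unique:
  fixes x :: "nat \<Rightarrow> 'b::real_inner"
  assumes d1: "convergent (\<lambda>n. norm (x n - v1))" and d2: "convergent (\<lambda>n. norm (x n - v2))"
    and k1: "strict_mono k1" "weakly_converges (x \<circ> k1) v1"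
    and k2: "strict_mono k2" "weakly_converges (x \<circ> k2) v2"
  shows "v1 = v2"
proof -
  have id: "inner (x n) (v1 - v2) = ((norm (x n - v2))\<^sup>2 - (norm (x n - v1))\<^sup>2 + (norm v1)\<^sup>2 - (norm v2)\<^sup>2) / 2" for n
    unfolding power2_norm_eq_inner by (simp add: inner_simps inner_commute algebra_simps)
  obtain L1 L2 where "(\<lambda>n. norm (x n - v1)) \<longlonglongrightarrow> L1" "(\<lambda>n. norm (x n - v2)) \<longlonglongrightarrow> L2"
    using d1 d2 unfolding convergent_def by blast
  then have "(\<lambda>n. inner (x n) (v1 - v2)) \<longlonglongrightarrow> (L2\<^sup>2 - L1\<^sup>2 + (norm v1)\<^sup>2 - (norm v2)\<^sup>2) / 2"
    unfolding id by (intro tendsto_intros) auto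
  then obtain Lq where Lq: "(\<lambda>n. inner (x n) (v1 - v2)) \<longlonglongrightarrow> Lq" by blast
  have "Lq = inner v1 (v1 - v2)"
    using LIMSEQ_unique[OF LIMSEQ_subseq_LIMSEQ[OF Lq k1(1)]] k1(2)
    unfolding weakly_converges_def by (simp add: o_def)
  moreover have "Lq = inner v2 (v1 - v2)"
    using LIMSEQ_unique[OF LIMSEQ_subseq_LIMSEQ[OF Lq k2(1)]] k2(2)
    unfolding weakly_converges_def by (simp add: o_def)
  ultimately have "inner (v1 - v2) (v1 - v2) = 0" by (simp add: inner_diff_left)
  then show ?thesis by simp
qed

lemma not_tendsto_subseq:
  fixes f :: "nat \<Rightarrow> real"
  assumes "\<not> f \<longlonglongrightarrow> L"
  shows "\<exists>e>0. \<exists>r::nat\<Rightarrow>nat. strict_mono r \<and> (\<forall>j. e \<le> \<bar>f (r j) - L\<bar>)"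
proof -
  obtain e where e: "e > 0" "\<And>N. \<exists>n\<ge>N. \<not> dist (f n) L < e"
    using assms unfolding LIMSEQ_def by blast
  have "\<forall>m. \<exists>n\<ge>m. n \<in> {n. e \<le> \<bar>f n - L\<bar>}"
  proof
    fix m
    obtain n where "n \<ge> m" "\<not> dist (f n) L < e" using e(2) by blast
    then show "\<exists>n\<ge>m. n \<in> {n. e \<le> \<bar>f n - L\<bar>}" unfolding dist_real_def by force
  qed
  then have "infinite {n. e \<le> \<bar>f n - L\<bar>}"
    using infinite_nat_iff_unbounded_le by blast
  then obtain r :: "nat \<Rightarrow> nat" where "strict_mono r" "\<forall>j. r j \<in> {n. e \<le> \<bar>f n - L\<bar>}"
    using infinite_enumerate by blast
  then show ?thesis using e(1) by blast
qed

lemma opial: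
  fixes x :: "nat \<Rightarrow> 'b::real_inner"
  assumes subD: "subspace D" and compD: "complete D" and xD: "\<And>n. x n \<in> D"
    and s0: "s0 \<in> S" and dist_conv: "\<And>s. s \<in> S \<Longrightarrow> convergent (\<lambda>n. norm (x n - s))"
    and cluster: "\<And>k v. strict_mono k \<Longrightarrow> v \<in> D \<Longrightarrow> weakly_converges (x \<circ> k) v \<Longrightarrow> v \<in> S"
  shows "\<exists>v\<in>S. weakly_converges x v"
proof -
  obtain M where M: "\<And>n. norm (x n - s0) \<le> M"
    using convergent_imp_Bseq[OF dist_conv[OF s0]] unfolding Bseq_def by force
  have bd: "norm (x n) \<le> norm s0 + M" for n
    using M[of n] norm_triangle_ineq2[of "x n" s0] by linarith
  have cluster_point: "\<exists>k v. strict_mono k \<and> v \<in> S \<and> weakly_converges (x \<circ> r \<circ> k) v"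
    if "strict_mono r" for r :: "nat \<Rightarrow> nat"
  proof -
    obtain k v where "strict_mono k" "v \<in> D" "weakly_converges (x \<circ> r \<circ> k) v"
      using weak_sequential_compactness[OF subD compD, of "x \<circ> r" "norm s0 + M"] xD bd by auto
    then show ?thesis using cluster[of "r \<circ> k" v] strict_mono_o[OF that] by (auto simp: o_assoc)
  qed
  obtain k0 v0 where k0: "strict_mono k0" "v0 \<in> S" "weakly_converges (x \<circ> k0) v0"
    using cluster_point[of id] by (auto simp: strict_mono_def)
  have "(\<lambda>n. inner (x n) w) \<longlonglongrightarrow> inner v0 w" for w
  proof (rule ccontr)
    assume "\<not> (\<lambda>n. inner (x n) w) \<longlonglongrightarrow> inner v0 w"
    then obtain e and r :: "nat \<Rightarrow> nat"
      where e: "e > 0" "strict_mono r" "\<And>j. e \<le> \<bar>inner (x (r j)) w - inner v0 w\<bar>"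
      using not_tendsto_subseq by blast
    obtain k v where k: "strict_mono k" "v \<in> S" "weakly_converges (x \<circ> r \<circ> k) v"
      using cluster_point[OF e(2)] by blast
    have "v = v0"
      using weak_cluster_point_unique[OF dist_conv[OF k(2)] dist_conv[OF k0(2)]
          strict_mono_o[OF e(2) k(1)] _ k0(1,3)] k(3) by (simp add: o_assoc)
    then have "(\<lambda>j. inner (x (r (k j))) w) \<longlonglongrightarrow> inner v0 w"
      using k(3) unfolding weakly_converges_def by simp
    then obtain j where "dist (inner (x (r (k j))) w) (inner v0 w) < e"
      using e(1) by (auto simp: tendsto_iff eventually_sequentially)
    then show False using e(3)[of "k j"] by (simp add: dist_real_def)
  qed
  then show ?thesis using k0(2) unfolding weakly_converges_def by blast
qed

lemma quasi_fejer_convergent: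
  fixes \<alpha> e :: "nat \<Rightarrow> real"
  assumes step: "\<And>n. \<alpha> (Suc n) \<le> \<alpha> n + e n" and e0: "\<And>n. e n \<ge> 0" and se: "summable e"
    and a0: "\<And>n. \<alpha> n \<ge> 0"
  shows "convergent \<alpha>"
proof -
  define \<beta> where "\<beta> n = \<alpha> n - (\<Sum>k<n. e k)" for n
  have decs: "decseq \<beta>" unfolding \<beta>_def using step by (intro decseq_SucI) (simp add: algebra_simps)
  have "Bseq \<beta>"
  proof (rule BseqI'[where K = "\<bar>\<beta> 0\<bar> + \<bar>suminf e\<bar>"])
    fix n
    have "\<beta> n \<le> \<beta> 0" using decs by (simp add: decseq_def)
    moreover have "\<beta> n \<ge> - suminf e"
      using sum_le_suminf[OF se, of "{..<n}"] e0 a0[of n] unfolding \<beta>_def by auto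
    ultimately show "norm (\<beta> n) \<le> \<bar>\<beta> 0\<bar> + \<bar>suminf e\<bar>" by simp
  qed
  then have "convergent \<beta>" using decs by (simp add: Bseq_monoseq_convergent monoseq_iff)
  moreover have "convergent (\<lambda>n. \<Sum>k<n. e k)"
    using se by (simp add: summable_iff_convergent)
  ultimately have "convergent (\<lambda>n. \<beta> n + (\<Sum>k<n. e k))" by (rule convergent_add)
  then show ?thesis unfolding \<beta>_def by simp
qed

definition vi_solutions :: "'b::real_inner set \<Rightarrow> ('b \<Rightarrow> 'b) \<Rightarrow> 'b set" where
  "vi_solutions C B = {s \<in> C. \<forall>v\<in>C. inner (v - s) (B s) \<ge> 0}"

text \<open>Test with points on
  the segment from v to c and let them tend to v.\<close>

lemma minty_solution:
  fixes C :: "'b::real_inner set" and B :: "'b \<Rightarrow> 'b"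
  assumes convC: "convex C" and vC: "v \<in> C"
    and lip: "\<And>u w. u \<in> C \<Longrightarrow> w \<in> C \<Longrightarrow> norm (B u - B w) \<le> \<kappa> * norm (u - w)"
    and minty: "\<And>c. c \<in> C \<Longrightarrow> inner (c - v) (B c) \<ge> 0"
  shows "v \<in> vi_solutions C B"
proof -
  have "inner (c - v) (B v) \<ge> 0" if cC: "c \<in> C" for c
  proof -
    define t where "t j = inverse (real (Suc j))" for j
    have t0: "0 < t j" "t j \<le> 1" for j unfolding t_def by (auto simp: field_simps)
    define cj where "cj j = v + t j *\<^sub>R (c - v)" for j
    have cjC: "cj j \<in> C" for j
      using convexD_alt[OF convC vC cC, of "t j"] t0[of j] unfolding cj_def by (simp add: algebra_simps)
    have pos: "inner (c - v) (B (cj j)) \<ge> 0" for j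
    proof -
      have "0 \<le> inner (cj j - v) (B (cj j))" by (rule minty[OF cjC])
      also have "\<dots> = t j * inner (c - v) (B (cj j))" unfolding cj_def by simp
      finally show ?thesis using t0[of j] by (simp add: zero_le_mult_iff)
    qed
    have "(\<lambda>j. norm (B (cj j) - B v)) \<longlonglongrightarrow> 0"
    proof (rule real_tendsto_sandwich[of "\<lambda>j. 0" _ _ "\<lambda>j. \<kappa> * (t j * norm (c - v))"])
      show "\<forall>\<^sub>F j in sequentially. norm (B (cj j) - B v) \<le> \<kappa> * (t j * norm (c - v))"
        using lip[OF cjC vC] t0 unfolding cj_def by (intro always_eventually allI) (simp add: abs_of_pos)
      have "(\<lambda>j. \<kappa> * (t j * norm (c - v))) \<longlonglongrightarrow> \<kappa> * (0 * norm (c - v))"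
        unfolding t_def by (intro tendsto_intros LIMSEQ_inverse_real_of_nat)
      then show "(\<lambda>j. \<kappa> * (t j * norm (c - v))) \<longlonglongrightarrow> 0" by simp
    qed auto
    then have "(\<lambda>j. inner (c - v) (B (cj j))) \<longlonglongrightarrow> inner (c - v) (B v)"
      by (intro tendsto_intros) (simp add: tendsto_norm_zero_iff LIM_zero_iff)
    then show ?thesis using pos by (intro LIMSEQ_le_const) auto
  qed
  then show ?thesis unfolding vi_solutions_def using vC by blast
qed

lemma fbf_step_estimate:
  fixes x s ph Bx Bph :: "'b::real_inner" and g k \<epsilon> :: real
  assumes vi: "inner (s - ph) ((x - g *\<^sub>R Bx) - ph) \<le> 0"
    and mon: "inner (ph - s) Bph \<ge> 0"
    and lip: "norm (Bx - Bph) \<le> k * norm (x - ph)"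
    and g0: "0 \<le> g" and gk: "g * k \<le> 1 - \<epsilon>" and e0: "0 < \<epsilon>" "\<epsilon> < 1"
  shows "(norm (ph + g *\<^sub>R (Bx - Bph) - s))\<^sup>2 \<le> (norm (x - s))\<^sup>2 - \<epsilon> * (norm (x - ph))\<^sup>2"
proof -
  have id: "(norm (ph + g *\<^sub>R (Bx - Bph) - s))\<^sup>2 = (norm (x - s))\<^sup>2 - (norm (x - ph))\<^sup>2
      + g\<^sup>2 * (norm (Bx - Bph))\<^sup>2 + 2 * inner (s - ph) ((x - g *\<^sub>R Bx) - ph) - 2 * g * inner (ph - s) Bph"
    unfolding power2_norm_eq_inner
    by (simp add: inner_simps inner_commute algebra_simps power2_eq_square)
  have "g * norm (Bx - Bph) \<le> (1 - \<epsilon>) * norm (x - ph)"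
    using mult_left_mono[OF lip g0] mult_right_mono[OF gk norm_ge_zero[of "x - ph"]]
    by (simp add: mult.assoc)
  then have "(g * norm (Bx - Bph))\<^sup>2 \<le> ((1 - \<epsilon>) * norm (x - ph))\<^sup>2"
    using g0 by (intro power_mono) auto
  also have "\<dots> = (1 - \<epsilon>)\<^sup>2 * (norm (x - ph))\<^sup>2" by (simp add: power_mult_distrib)
  also have "\<dots> \<le> (1 - \<epsilon>) * (norm (x - ph))\<^sup>2"
    by (rule mult_right_mono) (use e0 in \<open>simp_all add: power2_eq_square\<close>)
  finally have "g\<^sup>2 * (norm (Bx - Bph))\<^sup>2 \<le> (1 - \<epsilon>) * (norm (x - ph))\<^sup>2"
    by (simp add: power_mult_distrib)
  moreover have "g * inner (ph - s) Bph \<ge> 0" using g0 mon by simp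
  ultimately show ?thesis unfolding id using vi by (simp add: algebra_simps del: power2_norm_eq_inner)
qed

text \<open>The exact step from x n is described by the projected point
  ph n and the corrected point T n; the errors move x (Suc n) away from T n by at most the
  summable amount E n.\<close>

locale fbf_iteration =
  fixes D C :: "'b::real_inner set" and P B :: "'b \<Rightarrow> 'b"
    and \<kappa> \<epsilon> :: real and \<gamma> :: "nat \<Rightarrow> real" and z :: 'b
    and x y p q ea eb ec :: "nat \<Rightarrow> 'b"
  assumes subD: "subspace D" and compD: "complete D"
    and CD: "C \<subseteq> D" and convC: "convex C" and compC: "complete C"
    and PC: "\<And>u. u \<in> D \<Longrightarrow> P u \<in> C"
    and Pvi: "\<And>u v. u \<in> D \<Longrightarrow> v \<in> C \<Longrightarrow> inner (v - P u) (u - P u) \<le> 0"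
    and BD: "\<And>u. u \<in> D \<Longrightarrow> B u \<in> D"
    and mono: "\<And>u v. u \<in> D \<Longrightarrow> v \<in> D \<Longrightarrow> inner (B u - B v) (u - v) \<ge> 0"
    and lip: "\<And>u v. u \<in> D \<Longrightarrow> v \<in> D \<Longrightarrow> norm (B u - B v) \<le> \<kappa> * norm (u - v)"
    and z: "z \<in> vi_solutions C B"
    and chi: "\<kappa> > 0" and eps: "0 < \<epsilon>" "\<epsilon> < 1 / (\<kappa> + 1)"
    and gamma: "\<And>n. \<epsilon> \<le> \<gamma> n \<and> \<gamma> n \<le> (1 - \<epsilon>) / \<kappa>"
    and x0: "x 0 \<in> D" and eD: "\<And>n. ea n \<in> D \<and> eb n \<in> D \<and> ec n \<in> D"
    and sa: "summable (\<lambda>n. norm (ea n))" and sb: "summable (\<lambda>n. norm (eb n))"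
    and sc: "summable (\<lambda>n. norm (ec n))"
    and y_def: "\<And>n. y n = x n - \<gamma> n *\<^sub>R (B (x n) + ea n)"
    and p_def: "\<And>n. p n = P (y n) + eb n"
    and q_def: "\<And>n. q n = p n - \<gamma> n *\<^sub>R (B (p n) + ec n)"
    and x_def: "\<And>n. x (Suc n) = x n - y n + q n"
begin

definition \<Gamma> :: real where "\<Gamma> = (1 - \<epsilon>) / \<kappa>"

lemma step_sizes: "0 < \<gamma> n" "\<gamma> n \<le> \<Gamma>" "\<gamma> n * \<kappa> \<le> 1 - \<epsilon>" "0 \<le> \<Gamma>" "\<epsilon> < 1"
proof -
  show "0 < \<gamma> n" using gamma[of n] eps by linarith
  show "\<gamma> n \<le> \<Gamma>" using gamma[of n] unfolding \<Gamma>_def by simp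
  then show "0 \<le> \<Gamma>" using \<open>0 < \<gamma> n\<close> by linarith
  show "\<gamma> n * \<kappa> \<le> 1 - \<epsilon>" using gamma[of n] chi by (simp add: pos_le_divide_eq)
  have "1 / (\<kappa> + 1) < 1" using chi by simp
  then show "\<epsilon> < 1" using eps by linarith
qed

lemma iterates_in_D: "x n \<in> D" "y n \<in> D" "p n \<in> D"
proof -
  have ea: "ea n \<in> D" and eb: "eb n \<in> D" and ec: "ec n \<in> D" for n using eD by auto
  have yD: "y n \<in> D" if "x n \<in> D" for n
    unfolding y_def using subD that BD ea by (intro subspace_diff subspace_scale subspace_add)
  have pD: "p n \<in> D" if "x n \<in> D" for n
    unfolding p_def using subD eb subsetD[OF CD PC[OF yD[OF that]]] by (intro subspace_add)
  have xD: "x n \<in> D" for n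
  proof (induction n)
    case (Suc n)
    have "q n \<in> D" unfolding q_def
      using subD pD[OF Suc] BD ec by (intro subspace_diff subspace_scale subspace_add)
    then show ?case unfolding x_def using subD yD[OF Suc] Suc by (intro subspace_diff subspace_add)
  qed (rule x0)
  show "x n \<in> D" "y n \<in> D" "p n \<in> D" using xD yD pD by blast+
qed

definition ph :: "nat \<Rightarrow> 'b" where "ph n = P (x n - \<gamma> n *\<^sub>R B (x n))"

definition T :: "nat \<Rightarrow> 'b" where "T n = ph n + \<gamma> n *\<^sub>R (B (x n) - B (ph n))"

definition E :: "nat \<Rightarrow> real" where
  "E n = \<Gamma> * norm (ea n) + (1 + \<Gamma> * \<kappa>) * (\<Gamma> * norm (ea n) + norm (eb n)) + \<Gamma> * norm (ec n)"

lemma forward_point_in_D: "x n - \<gamma> n *\<^sub>R B (x n) \<in> D"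
  using subD iterates_in_D BD by (intro subspace_diff subspace_scale) auto

lemma ph_in_C: "ph n \<in> C" and ph_in_D: "ph n \<in> D"
  using PC[OF forward_point_in_D] CD unfolding ph_def by auto

lemma summable_E: "summable E" and E_nonneg: "E n \<ge> 0"
  unfolding E_def using step_sizes(4) chi by (auto intro!: summable_add summable_mult sa sb sc)

text \<open>The inexact projected point p n stays close to ph n (nonexpansiveness of P).\<close>

lemma p_close_to_ph: "norm (p n - ph n) \<le> \<Gamma> * norm (ea n) + norm (eb n)"
proof -
  have "y n - (x n - \<gamma> n *\<^sub>R B (x n)) = - (\<gamma> n *\<^sub>R ea n)"
    unfolding y_def by (simp add: algebra_simps)
  then have "norm (y n - (x n - \<gamma> n *\<^sub>R B (x n))) = \<gamma> n * norm (ea n)"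
    using step_sizes(1)[of n] by simp
  moreover have "norm (P (y n) - ph n) \<le> norm (y n - (x n - \<gamma> n *\<^sub>R B (x n)))"
    unfolding ph_def
    by (intro projection_nonexpansive Pvi PC iterates_in_D forward_point_in_D)
  ultimately have "norm (P (y n) - ph n) \<le> \<Gamma> * norm (ea n)"
    using step_sizes(2)[of n] by (smt (verit) mult_right_mono norm_ge_zero)
  then show ?thesis using norm_triangle_ineq[of "P (y n) - ph n" "eb n"] unfolding p_def
    by (simp add: algebra_simps)
qed

lemma inexact_step_error: "norm (x (Suc n) - T n) \<le> E n"
proof -
  let ?g = "\<gamma> n" and ?d = "p n - ph n"
  have split: "x (Suc n) - T n = ?g *\<^sub>R ea n + ?d - ?g *\<^sub>R (B (p n) - B (ph n)) - ?g *\<^sub>R ec n"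
    unfolding x_def y_def q_def T_def by (simp add: algebra_simps)
  have triangle: "norm (a + b - c - d) \<le> norm a + norm b + norm c + norm d" for a b c d :: 'b
    using norm_triangle_ineq4[of "a + b - c" d] norm_triangle_ineq4[of "a + b" c] norm_triangle_ineq[of a b]
    by linarith
  have "norm (x (Suc n) - T n)
      \<le> ?g * norm (ea n) + norm ?d + ?g * norm (B (p n) - B (ph n)) + ?g * norm (ec n)"
    using triangle[of "?g *\<^sub>R ea n" ?d "?g *\<^sub>R (B (p n) - B (ph n))" "?g *\<^sub>R ec n"]
      step_sizes(1)[of n] unfolding split by simp
  also have "\<dots> \<le> \<Gamma> * norm (ea n) + norm ?d + \<Gamma> * (\<kappa> * norm ?d) + \<Gamma> * norm (ec n)"
    using step_sizes(1,2)[of n] step_sizes(4) lip[OF iterates_in_D(3) ph_in_D, of n n]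
    by (intro add_mono mult_mono) auto
  also have "\<dots> = \<Gamma> * norm (ea n) + (1 + \<Gamma> * \<kappa>) * norm ?d + \<Gamma> * norm (ec n)"
    by (simp add: algebra_simps)
  also have "\<dots> \<le> E n"
    using p_close_to_ph[of n] step_sizes(4) chi unfolding E_def by (intro add_mono mult_left_mono) auto
  finally show ?thesis .
qed

lemma exact_step_fejer:
  assumes sS: "s \<in> vi_solutions C B"
  shows "(norm (T n - s))\<^sup>2 \<le> (norm (x n - s))\<^sup>2 - \<epsilon> * (norm (x n - ph n))\<^sup>2"
proof -
  have sC: "s \<in> C" and sD: "s \<in> D" using sS CD unfolding vi_solutions_def by auto
  have vi: "inner (s - ph n) ((x n - \<gamma> n *\<^sub>R B (x n)) - ph n) \<le> 0"
    using Pvi[OF forward_point_in_D sC] unfolding ph_def by simp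
  have "inner (ph n - s) (B (ph n)) = inner (B (ph n) - B s) (ph n - s) + inner (ph n - s) (B s)"
    by (simp add: inner_diff_left inner_diff_right inner_commute)
  then have mon: "inner (ph n - s) (B (ph n)) \<ge> 0"
    using mono[OF ph_in_D sD, of n] sS ph_in_C[of n] unfolding vi_solutions_def by fastforce
  show ?thesis unfolding T_def
    using fbf_step_estimate[OF vi mon lip[OF iterates_in_D(1) ph_in_D] _ _ eps(1) step_sizes(5)]
      step_sizes(1,3)[of n] by simp
qed

lemma exact_step_nonexpansive:
  assumes "s \<in> vi_solutions C B"
  shows "norm (T n - s) \<le> norm (x n - s)"
proof (rule power2_le_imp_le)
  have "0 \<le> \<epsilon> * (norm (x n - ph n))\<^sup>2" using eps(1) by simp
  then show "(norm (T n - s))\<^sup>2 \<le> (norm (x n - s))\<^sup>2" using exact_step_fejer[OF assms, of n] by linarith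
qed simp

text \<open>Consequently the distance to any solution grows at most by E n per step, so it converges
  (quasi-Fejer monotonicity); in particular the iterates are bounded.\<close>

lemma distance_step: "s \<in> vi_solutions C B \<Longrightarrow> norm (x (Suc n) - s) \<le> norm (T n - s) + E n"
  using norm_triangle_ineq[of "T n - s" "x (Suc n) - T n"] inexact_step_error[of n] by simp

lemma distances_convergent:
  assumes "s \<in> vi_solutions C B"
  shows "convergent (\<lambda>n. norm (x n - s))"
proof (rule quasi_fejer_convergent[OF _ E_nonneg summable_E])
  show "norm (x (Suc n) - s) \<le> norm (x n - s) + E n" for n
    using distance_step[OF assms, of n] exact_step_nonexpansive[OF assms, of n] by linarith
qed simp

lemma iterates_bounded: obtains M where "\<And>n. norm (x n - z) \<le> M"
  using convergent_imp_Bseq[OF distances_convergent[OF z]] unfolding Bseq_def by force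

text \<open>The residual x n - ph n tends to 0: by the Fejer inequality its square is bounded by a
  multiple of norm (x n - z) - norm (x (Suc n) - z) + E n, which tends to 0.\<close>

lemma residual_tendsto_zero: "(\<lambda>n. norm (x n - ph n)) \<longlonglongrightarrow> 0"
proof -
  obtain M where M: "\<And>n. norm (x n - z) \<le> M" using iterates_bounded by blast
  define r where "r n = norm (x n - z)" for n
  obtain Lr where Lr: "r \<longlonglongrightarrow> Lr" using distances_convergent[OF z] unfolding r_def convergent_def by blast
  have decrease: "(\<lambda>n. r n - r (Suc n) + E n) \<longlonglongrightarrow> 0"
    using tendsto_add[OF tendsto_diff[OF Lr LIMSEQ_Suc[OF Lr]] summable_LIMSEQ_zero[OF summable_E]]
    by simp
  have bound: "(norm (x n - ph n))\<^sup>2 \<le> (2 * M / \<epsilon>) * (r n - r (Suc n) + E n)" for n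
  proof -
    define t where "t = norm (T n - z)"
    have "\<epsilon> * (norm (x n - ph n))\<^sup>2 \<le> (r n)\<^sup>2 - t\<^sup>2"
      using exact_step_fejer[OF z, of n] unfolding r_def t_def by simp
    also have "\<dots> = (r n - t) * (r n + t)" by (simp add: power2_eq_square algebra_simps)
    also have "\<dots> \<le> (r n - r (Suc n) + E n) * (2 * M)"
      using distance_step[OF z, of n] exact_step_nonexpansive[OF z, of n] M[of n]
      unfolding r_def t_def by (intro mult_mono) auto
    finally show ?thesis using eps(1) by (simp add: field_simps mult.commute)
  qed
  have "(\<lambda>n. (norm (x n - ph n))\<^sup>2) \<longlonglongrightarrow> 0"
  proof (rule real_tendsto_sandwich[of "\<lambda>n. 0" _ _ "\<lambda>n. (2 * M / \<epsilon>) * (r n - r (Suc n) + E n)"])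
    show "(\<lambda>n. (2 * M / \<epsilon>) * (r n - r (Suc n) + E n)) \<longlonglongrightarrow> 0"
      using tendsto_mult[OF tendsto_const[of "2 * M / \<epsilon>"] decrease] by simp
  qed (use bound in auto)
  then have "(\<lambda>n. sqrt ((norm (x n - ph n))\<^sup>2)) \<longlonglongrightarrow> sqrt 0" by (rule tendsto_real_sqrt)
  then show ?thesis by simp
qed

lemma p_minus_x_tendsto_zero: "(\<lambda>n. norm (p n - x n)) \<longlonglongrightarrow> 0"
proof (rule real_tendsto_sandwich[of "\<lambda>n. 0" _ _ "\<lambda>n. \<Gamma> * norm (ea n) + norm (eb n) + norm (x n - ph n)"])
  show "\<forall>\<^sub>F n in sequentially. norm (p n - x n) \<le> \<Gamma> * norm (ea n) + norm (eb n) + norm (x n - ph n)"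
    using p_close_to_ph norm_triangle_ineq4[of "p _ - ph _" "x _ - ph _"]
    by (intro always_eventually allI) (smt (verit, best) diff_diff_eq2 diff_add_cancel)
  show "(\<lambda>n. \<Gamma> * norm (ea n) + norm (eb n) + norm (x n - ph n)) \<longlonglongrightarrow> 0"
    using tendsto_add[OF tendsto_add[OF tendsto_mult[OF tendsto_const summable_LIMSEQ_zero[OF sa]]
          summable_LIMSEQ_zero[OF sb]] residual_tendsto_zero] by simp
qed auto

text \<open>Along the iteration, every point c of C satisfies the Minty inequality up to an error
  that vanishes with the residual; this comes from the variational characterisation of
  ph n, monotonicity of B and the Lipschitz bound.\<close>

lemma minty_defect:
  assumes cC: "c \<in> C"
  shows "inner (c - ph n) (B c) \<ge> - ((\<kappa> + 1 / \<epsilon>) * (norm (c - ph n) * norm (x n - ph n)))"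
proof -
  let ?u = "x n - ph n" and ?g = "\<gamma> n"
  have "inner (c - ph n) ?u \<le> ?g * inner (c - ph n) (B (x n))"
    using Pvi[OF forward_point_in_D cC, of n] unfolding ph_def[symmetric]
    by (simp add: inner_diff_right)
  moreover have "- (norm (c - ph n) * norm ?u) \<le> inner (c - ph n) ?u"
    using Cauchy_Schwarz_ineq2[of "c - ph n" ?u] by linarith
  ultimately have "- (norm (c - ph n) * norm ?u) \<le> ?g * inner (c - ph n) (B (x n))" by linarith
  then have "- (norm (c - ph n) * norm ?u) / ?g \<le> inner (c - ph n) (B (x n))"
    by (simp only: pos_divide_le_eq[OF step_sizes(1)]) (simp add: mult.commute)
  moreover have "(norm (c - ph n) * norm ?u) / ?g \<le> (norm (c - ph n) * norm ?u) / \<epsilon>"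
    using gamma[of n] eps by (intro divide_left_mono) auto
  ultimately have forward: "- ((norm (c - ph n) * norm ?u) / \<epsilon>) \<le> inner (c - ph n) (B (x n))"
    by (smt (verit) minus_divide_left)
  have monotone: "inner (c - ph n) (B c - B (ph n)) \<ge> 0"
    using mono[OF subsetD[OF CD cC] ph_in_D[of n]] by (simp add: inner_commute)
  have "\<bar>inner (c - ph n) (B (ph n) - B (x n))\<bar> \<le> norm (c - ph n) * norm (B (ph n) - B (x n))"
    by (rule Cauchy_Schwarz_ineq2)
  also have "\<dots> \<le> norm (c - ph n) * (\<kappa> * norm ?u)"
    using lip[OF ph_in_D iterates_in_D(1), of n n] by (simp add: mult_left_mono norm_minus_commute)
  finally have lipschitz: "inner (c - ph n) (B (ph n) - B (x n)) \<ge> - (norm (c - ph n) * (\<kappa> * norm ?u))"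
    by linarith
  have "inner (c - ph n) (B c) = inner (c - ph n) (B c - B (ph n))
      + inner (c - ph n) (B (ph n) - B (x n)) + inner (c - ph n) (B (x n))"
    by (simp add: inner_diff_right)
  then show ?thesis using forward monotone lipschitz by (simp add: algebra_simps)
qed

text \<open>Weak cluster points of the iterates are solutions: they lie in C because the ph n
  (with the same weak limit) do, and they satisfy the Minty inequality in the limit.\<close>

lemma cluster_points_solve:
  assumes k: "strict_mono k" and wk: "weakly_converges (x \<circ> k) v"
  shows "v \<in> vi_solutions C B"
proof (rule minty_solution[OF convC])
  have res: "(\<lambda>j. norm (x (k j) - ph (k j))) \<longlonglongrightarrow> 0"
    using LIMSEQ_subseq_LIMSEQ[OF residual_tendsto_zero k] by (simp add: o_def)
  have wph: "weakly_converges (ph \<circ> k) v"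
    by (rule weakly_converges_shift[OF wk]) (use res in \<open>simp add: norm_minus_commute\<close>)
  show vC: "v \<in> C" using weak_limit_in_convex[OF convC compC, of "ph \<circ> k"] ph_in_C wph by simp
  show "norm (B u - B w) \<le> \<kappa> * norm (u - w)" if "u \<in> C" "w \<in> C" for u w
    using lip that CD by blast
  show "inner (c - v) (B c) \<ge> 0" if cC: "c \<in> C" for c
  proof -
    obtain M where M: "\<And>n. norm (x n - z) \<le> M" using iterates_bounded by blast
    define L where "L = norm (c - z) + M"
    have dist_c: "norm (c - ph n) \<le> L + norm (x n - ph n)" for n
      using norm_triangle_ineq[of "c - z" "z - x n"] norm_triangle_ineq[of "(c - z) + (z - x n)" "x n - ph n"]
        M[of n] unfolding L_def by (simp add: norm_minus_commute)
    have low: "inner (c - ph (k j)) (B c)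
        \<ge> - ((\<kappa> + 1 / \<epsilon>) * ((L + norm (x (k j) - ph (k j))) * norm (x (k j) - ph (k j))))" for j
    proof -
      have "(\<kappa> + 1 / \<epsilon>) * (norm (c - ph (k j)) * norm (x (k j) - ph (k j)))
          \<le> (\<kappa> + 1 / \<epsilon>) * ((L + norm (x (k j) - ph (k j))) * norm (x (k j) - ph (k j)))"
        using dist_c[of "k j"] chi eps(1) by (intro mult_left_mono mult_right_mono) auto
      then show ?thesis using minty_defect[OF cC, of "k j"] by linarith
    qed
    have "(\<lambda>j. - ((\<kappa> + 1 / \<epsilon>) * ((L + norm (x (k j) - ph (k j))) * norm (x (k j) - ph (k j)))))
        \<longlonglongrightarrow> - ((\<kappa> + 1 / \<epsilon>) * ((L + 0) * 0))"
      by (intro tendsto_intros res)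
    moreover have "(\<lambda>j. inner (c - ph (k j)) (B c)) \<longlonglongrightarrow> inner (c - v) (B c)"
      using tendsto_diff[OF tendsto_const[of "inner c (B c)"] wph[unfolded weakly_converges_def, rule_format, of "B c"]]
      by (simp add: inner_diff_left)
    ultimately show ?thesis using low by (intro LIMSEQ_le) auto
  qed
qed

theorem weak_convergence:
  "\<exists>xb\<in>vi_solutions C B. weakly_converges x xb \<and> weakly_converges p xb"
proof -
  have "\<exists>xb\<in>vi_solutions C B. weakly_converges x xb"
    by (rule opial[OF subD compD iterates_in_D(1) z])
      (simp_all add: distances_convergent cluster_points_solve)
  then show ?thesis using weakly_converges_shift[OF _ p_minus_x_tendsto_zero] by blast
qed

end

definition block_supported :: "nat \<Rightarrow> (nat \<Rightarrow> 'a::zero) \<Rightarrow> bool" where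
  "block_supported m f \<longleftrightarrow> (\<forall>i. i \<notin> {1..m} \<longrightarrow> f i = 0)"

definition truncate :: "nat \<Rightarrow> (nat \<Rightarrow> 'a::zero) \<Rightarrow> nat \<Rightarrow> 'a" where
  "truncate m f i = (if i \<in> {1..m} then f i else 0)"

definition lift_set :: "(nat \<Rightarrow> 'a::real_inner) set \<Rightarrow> 'a fsv set" where
  "lift_set A = {X. vf X \<in> A}"

lemma block_supported_truncate [simp]: "block_supported m (truncate m f)"
  unfolding block_supported_def truncate_def by simp

lemma block_supported_dsum: "f \<in> dsum m H \<Longrightarrow> block_supported m f"
  unfolding dsum_def block_supported_def by auto

lemma vf_mkv_block: "block_supported m f \<Longrightarrow> vf (mkv f) = (f :: nat \<Rightarrow> 'a::real_inner)"
proof (rule mkv_inverse)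
  assume "block_supported m f"
  then have "{i. f i \<noteq> 0} \<subseteq> {1..m}" unfolding block_supported_def by blast
  then show "f \<in> {f. finite {i. f i \<noteq> 0}}" using finite_subset by blast
qed

lemma inner_block:
  "block_supported m (vf X) \<Longrightarrow> inner X Y = (\<Sum>i\<in>{1..m}. inner (vf X i) (vf Y i))"
  unfolding inner_fsv_def by (rule fsv_inner_superset) (auto simp: supp_def block_supported_def)

lemma norm_block: "block_supported m (vf X) \<Longrightarrow> (norm X)\<^sup>2 = dnorm2 m (vf X)"
  unfolding power2_norm_eq_inner dnorm2_def by (simp add: inner_block)

lemma inner_unit_vector:
  "inner X (mkv (\<lambda>j. if j = i then w else 0)) = inner (vf X i) (w::'a::real_inner)"
proof -
  have v: "vf (mkv (\<lambda>j. if j = i then w else 0)) = (\<lambda>j. if j = i then w else 0)"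
    by (rule mkv_inverse) (auto intro: finite_subset[of _ "{i}"])
  have "inner X (mkv (\<lambda>j. if j = i then w else 0))
      = (\<Sum>j\<in>{i}. inner (vf X j) (vf (mkv (\<lambda>j. if j = i then w else 0)) j))"
    unfolding inner_fsv_def by (rule fsv_inner_superset2) (auto simp: supp_def v)
  then show ?thesis by (simp add: v)
qed

lemma weakly_converges_coordinate:
  "weakly_converges S l \<Longrightarrow> weakly_converges (\<lambda>n. vf (S n) i) (vf l i)"
  unfolding weakly_converges_def
proof (intro allI impI)
  fix w assume "\<forall>y. (\<lambda>n. inner (S n) y) \<longlonglongrightarrow> inner l y"
  then have "(\<lambda>n. inner (S n) (mkv (\<lambda>j. if j = i then w else 0)))
      \<longlonglongrightarrow> inner l (mkv (\<lambda>j. if j = i then w else 0))" by blast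
  then show "(\<lambda>n. inner (vf (S n) i) w) \<longlonglongrightarrow> inner (vf l i) w" by (simp add: inner_unit_vector)
qed

lemma lift_dsum_subspace:
  assumes "hilbert_family m H"
  shows "subspace (lift_set (dsum m H))"
proof -
  have Hs: "subspace (H i)" if "i \<in> {1..m}" for i using assms that unfolding hilbert_family_def by auto
  show ?thesis
    unfolding subspace_def lift_set_def dsum_def
    using Hs by (auto simp: zero_fsv.rep_eq plus_fsv.rep_eq scaleR_fsv.rep_eq
        subspace_0 subspace_add subspace_scale)
qed

text \<open>The lifted direct sum is complete: a Cauchy sequence of vectors is coordinatewise
  Cauchy, the coordinates converge in the closed spaces H i, and since only the m coordinates
  in {1..m} matter, the vectors converge to the vector of coordinate limits.\<close>

lemma lift_dsum_complete:
  assumes H: "hilbert_family m (H :: nat \<Rightarrow> 'a::{real_inner,complete_space} set)"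
  shows "complete (lift_set (dsum m H))"
  unfolding complete_def
proof (intro allI impI)
  fix X :: "nat \<Rightarrow> 'a fsv"
  assume a: "(\<forall>n. X n \<in> lift_set (dsum m H)) \<and> Cauchy X"
  have "Cauchy (\<lambda>n. vf (X n) i)" for i
  proof (rule metric_CauchyI)
    fix e :: real assume "e > 0"
    then obtain M where M: "\<And>k n. k \<ge> M \<Longrightarrow> n \<ge> M \<Longrightarrow> dist (X k) (X n) < e"
      using a unfolding Cauchy_def by blast
    have "dist (vf (X k) i) (vf (X n) i) < e" if "k \<ge> M" "n \<ge> M" for k n
      using norm_coordinate_le[of "X k - X n" i] M[OF that]
      by (simp add: dist_norm minus_fsv.rep_eq)
    then show "\<exists>M. \<forall>k\<ge>M. \<forall>n\<ge>M. dist (vf (X k) i) (vf (X n) i) < e" by blast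
  qed
  then obtain Lf where Lf: "\<And>i. (\<lambda>n. vf (X n) i) \<longlonglongrightarrow> Lf i"
    unfolding convergent_eq_Cauchy[symmetric] convergent_def by metis
  define l where "l = truncate m Lf"
  have ld: "l \<in> dsum m H"
  proof -
    have "Lf i \<in> H i" if i: "i \<in> {1..m}" for i
      using H i a closed_sequentially[OF _ _ Lf[of i], of "H i"]
      unfolding hilbert_family_def lift_set_def dsum_def by auto
    then show ?thesis unfolding dsum_def l_def truncate_def by simp
  qed
  have vl: "vf (mkv l) = l" unfolding l_def by (rule vf_mkv_block[OF block_supported_truncate])
  have nrm: "norm (X n - mkv l) = sqrt (\<Sum>i\<in>{1..m}. (norm (vf (X n) i - l i))\<^sup>2)" for n
  proof -
    have "block_supported m (vf (X n - mkv l))"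
      using a block_supported_dsum[OF ld] unfolding lift_set_def
      by (auto simp: minus_fsv.rep_eq vl block_supported_def dsum_def)
    from norm_block[OF this] show ?thesis
      unfolding dnorm2_def by (simp add: minus_fsv.rep_eq vl real_sqrt_unique)
  qed
  have "(\<lambda>n. sqrt (\<Sum>i\<in>{1..m}. (norm (vf (X n) i - l i))\<^sup>2)) \<longlonglongrightarrow> sqrt (\<Sum>i\<in>{1..m}. (norm (l i - l i))\<^sup>2)"
    using Lf by (intro tendsto_intros) (simp add: l_def truncate_def)
  then have "(\<lambda>n. norm (X n - mkv l)) \<longlonglongrightarrow> 0" unfolding nrm by simp
  then have "X \<longlonglongrightarrow> mkv l" by (simp add: tendsto_norm_zero_iff LIM_zero_iff)
  moreover have "mkv l \<in> lift_set (dsum m H)" using vl ld unfolding lift_set_def by simp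
  ultimately show "\<exists>L\<in>lift_set (dsum m H). X \<longlonglongrightarrow> L" by blast
qed

lemma lift_set_convex: "dconvex C \<Longrightarrow> convex (lift_set C)"
  unfolding convex_def lift_set_def dconvex_def
  by (auto simp: plus_fsv.rep_eq scaleR_fsv.rep_eq eq_diff_eq[symmetric])

text \<open>The sequential closedness of C in the direct-sum norm is exactly closedness of the lifted
  set, so the lifted set is complete as a closed subset of the complete lifted direct sum.\<close>

lemma lift_set_complete:
  assumes H: "hilbert_family m H" and C_sub: "C \<subseteq> dsum m H" and C_closed: "dclosed m H C"
  shows "complete (lift_set C)"
  unfolding complete_def
proof (intro allI impI)
  fix X :: "nat \<Rightarrow> 'a fsv" assume X: "(\<forall>n. X n \<in> lift_set C) \<and> Cauchy X"
  then obtain L where L: "L \<in> lift_set (dsum m H)" "X \<longlonglongrightarrow> L"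
    using lift_dsum_complete[OF H] C_sub unfolding complete_def lift_set_def by blast
  have "sqrt (dnorm2 m (\<lambda>i. vf (X n) i - vf L i)) = norm (X n - L)" for n
  proof -
    have "block_supported m (vf (X n - L))"
      using X L(1) C_sub unfolding lift_set_def
      by (auto simp: minus_fsv.rep_eq block_supported_def dsum_def)
    from norm_block[OF this] show ?thesis by (simp add: minus_fsv.rep_eq real_sqrt_unique)
  qed
  moreover have "(\<lambda>n. norm (X n - L)) \<longlonglongrightarrow> 0" using L(2) by (simp add: tendsto_norm_zero_iff LIM_zero_iff)
  ultimately have "vf L \<in> C"
    using C_closed[unfolded dclosed_def, rule_format, of "\<lambda>n. vf (X n)" "vf L"] X L(1)
    unfolding lift_set_def by simp
  then show "\<exists>l\<in>lift_set C. X \<longlonglongrightarrow> l" using L(2) unfolding lift_set_def by blast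
qed

definition block_op :: "nat \<Rightarrow> (nat \<Rightarrow> (nat \<Rightarrow> 'a) \<Rightarrow> 'a) \<Rightarrow> 'a::real_inner fsv \<Rightarrow> 'a fsv" where
  "block_op m G X = mkv (truncate m (\<lambda>i. G i (vf X)))"

definition proj_op :: "nat \<Rightarrow> (nat \<Rightarrow> 'a) set \<Rightarrow> 'a::real_inner fsv \<Rightarrow> 'a fsv" where
  "proj_op m C X = mkv (dproj m C (vf X))"

lemma vf_block_op: "vf (block_op m G X) = truncate m (\<lambda>i. G i (vf X))"
  unfolding block_op_def by (rule vf_mkv_block[OF block_supported_truncate])

lemma inner_block_op:
  "block_supported m (vf X) \<Longrightarrow> inner X (block_op m G Y) = (\<Sum>i\<in>{1..m}. inner (vf X i) (G i (vf Y)))"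
  by (simp add: inner_block vf_block_op truncate_def)

lemma block_supported_lift_diff:
  "U \<in> lift_set (dsum m H) \<Longrightarrow> V \<in> lift_set (dsum m H) \<Longrightarrow> block_supported m (vf (U - V))"
  unfolding lift_set_def by (auto simp: minus_fsv.rep_eq block_supported_def dsum_def)

lemma dist_block:
  "block_supported m (vf (U - V)) \<Longrightarrow> (dist U V)\<^sup>2 = dnorm2 m (\<lambda>i. vf U i - vf V i)"
  using norm_block[of m "U - V"] by (simp add: dist_norm minus_fsv.rep_eq)

lemma block_op_in_dsum:
  assumes grad: "\<And>w i. w \<in> dsum m H \<Longrightarrow> i \<in> {1..m} \<Longrightarrow> G i w \<in> H i"
  shows "U \<in> lift_set (dsum m H) \<Longrightarrow> block_op m G U \<in> lift_set (dsum m H)"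
  using grad unfolding lift_set_def by (simp add: vf_block_op dsum_def truncate_def)

lemma block_op_monotone:
  assumes mono: "\<And>u v. u \<in> dsum m H \<Longrightarrow> v \<in> dsum m H \<Longrightarrow>
                 (\<Sum>i\<in>{1..m}. inner (G i u - G i v) (u i - v i)) \<ge> 0"
    and U: "U \<in> lift_set (dsum m H)" and V: "V \<in> lift_set (dsum m H)"
  shows "inner (block_op m G U - block_op m G V) (U - V) \<ge> 0"
proof -
  have "inner (block_op m G U - block_op m G V) (U - V)
      = inner (U - V) (block_op m G U) - inner (U - V) (block_op m G V)"
    by (simp add: inner_diff_right inner_commute)
  also have "\<dots> = (\<Sum>i\<in>{1..m}. inner (G i (vf U) - G i (vf V)) (vf U i - vf V i))"
    unfolding inner_block_op[OF block_supported_lift_diff[OF U V]]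
    by (simp add: sum_subtractf[symmetric] minus_fsv.rep_eq inner_diff_left inner_diff_right
        inner_commute algebra_simps)
  finally show ?thesis using mono U V unfolding lift_set_def by simp
qed

lemma block_op_lipschitz:
  assumes lip: "\<And>u v. u \<in> dsum m H \<Longrightarrow> v \<in> dsum m H \<Longrightarrow>
                 (\<Sum>i\<in>{1..m}. (norm (G i u - G i v))\<^sup>2) \<le> \<kappa>\<^sup>2 * (\<Sum>i\<in>{1..m}. (norm (u i - v i))\<^sup>2)"
    and k: "\<kappa> \<ge> 0" and U: "U \<in> lift_set (dsum m H)" and V: "V \<in> lift_set (dsum m H)"
  shows "norm (block_op m G U - block_op m G V) \<le> \<kappa> * norm (U - V)"
proof (rule power2_le_imp_le)
  have "(norm (block_op m G U - block_op m G V))\<^sup>2 = (\<Sum>i\<in>{1..m}. (norm (G i (vf U) - G i (vf V)))\<^sup>2)"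
    using norm_block[of m "block_op m G U - block_op m G V"]
    by (simp add: minus_fsv.rep_eq vf_block_op truncate_def block_supported_def dnorm2_def)
  also have "\<dots> \<le> \<kappa>\<^sup>2 * (norm (U - V))\<^sup>2"
    using lip[of "vf U" "vf V"] U V norm_block[OF block_supported_lift_diff[OF U V]]
    unfolding lift_set_def dnorm2_def by (simp add: minus_fsv.rep_eq)
  finally show "(norm (block_op m G U - block_op m G V))\<^sup>2 \<le> (\<kappa> * norm (U - V))\<^sup>2"
    by (simp add: power_mult_distrib)
qed (use k in simp)

text \<open>dproj is the nearest-point map of the direct sum; on vectors it is the metric projection
  onto the lifted set, which exists because that set is complete and convex.\<close>

lemma proj_op_nearest:
  assumes H: "hilbert_family m H" and C_sub: "C \<subseteq> dsum m H" and C_ne: "C \<noteq> {}"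
    and C_closed: "dclosed m H C" and C_convex: "dconvex C"
    and U: "block_supported m (vf U)"
  shows "proj_op m C U \<in> lift_set C" and "vf (proj_op m C U) = dproj m C (vf U)"
    and "\<And>V. V \<in> lift_set C \<Longrightarrow> dist U (proj_op m C U) \<le> dist U V"
proof -
  have dist_eq: "(dist U V)\<^sup>2 = dnorm2 m (\<lambda>i. vf U i - vf V i)" if "V \<in> lift_set C" for V
  proof (rule dist_block)
    show "block_supported m (vf (U - V))"
      using U block_supported_dsum[of "vf V"] C_sub that unfolding lift_set_def block_supported_def
      by (auto simp: minus_fsv.rep_eq)
  qed
  have vf_mkv_C: "vf (mkv c) = c" if "c \<in> C" for c
    using vf_mkv_block[OF block_supported_dsum] C_sub that by blast
  obtain c where "c \<in> C" using C_ne by blast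
  then have "mkv c \<in> lift_set C" using vf_mkv_C unfolding lift_set_def by simp
  then have "lift_set C \<noteq> {}" by blast
  then obtain p0 where p0: "p0 \<in> lift_set C" "\<And>V. V \<in> lift_set C \<Longrightarrow> dist U p0 \<le> dist U V"
    using nearest_point_exists[OF lift_set_convex[OF C_convex] lift_set_complete[OF H C_sub C_closed]]
    by blast
  have "vf p0 \<in> C \<and> (\<forall>c\<in>C. dnorm2 m (\<lambda>i. vf U i - vf p0 i) \<le> dnorm2 m (\<lambda>i. vf U i - c i))"
  proof (intro conjI ballI)
    fix c assume c: "c \<in> C"
    then have "mkv c \<in> lift_set C" unfolding lift_set_def using vf_mkv_C by simp
    then show "dnorm2 m (\<lambda>i. vf U i - vf p0 i) \<le> dnorm2 m (\<lambda>i. vf U i - c i)"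
      using p0 dist_eq[of p0] dist_eq[of "mkv c"] vf_mkv_C[OF c]
      by (metis power_mono zero_le_dist)
  qed (use p0 lift_set_def in auto)
  then have "dproj m C (vf U) \<in> C \<and>
      (\<forall>c\<in>C. dnorm2 m (\<lambda>i. vf U i - dproj m C (vf U) i) \<le> dnorm2 m (\<lambda>i. vf U i - c i))"
    unfolding dproj_def
    by (rule someI[where P = "\<lambda>p. p \<in> C \<and> (\<forall>c\<in>C. dnorm2 m (\<lambda>i. vf U i - p i) \<le> dnorm2 m (\<lambda>i. vf U i - c i))"])
  then have dp: "dproj m C (vf U) \<in> C"
    "\<And>c. c \<in> C \<Longrightarrow> dnorm2 m (\<lambda>i. vf U i - dproj m C (vf U) i) \<le> dnorm2 m (\<lambda>i. vf U i - c i)"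
    by blast+
  show vP: "vf (proj_op m C U) = dproj m C (vf U)" unfolding proj_op_def using vf_mkv_C[OF dp(1)] .
  show PC: "proj_op m C U \<in> lift_set C" unfolding lift_set_def using vP dp(1) by simp
  show "dist U (proj_op m C U) \<le> dist U V" if V: "V \<in> lift_set C" for V
  proof (rule power2_le_imp_le)
    show "(dist U (proj_op m C U))\<^sup>2 \<le> (dist U V)\<^sup>2"
      using dist_eq[OF PC] dist_eq[OF V] dp(2)[of "vf V"] V vP unfolding lift_set_def by simp
  qed simp
qed

lemma normal_cone_solution:
  assumes C_sub: "C \<subseteq> dsum m H"
    and z: "(\<lambda>i. if i \<in> {1..m} then - G i z else 0) \<in> normal_cone m C z"
  shows "mkv z \<in> vi_solutions (lift_set C) (block_op m G)"
proof -
  have zC: "z \<in> C" using z unfolding normal_cone_def by (auto split: if_splits)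
  have vz: "vf (mkv z) = z" using vf_mkv_block[OF block_supported_dsum] C_sub zC by blast
  have "inner (V - mkv z) (block_op m G (mkv z)) \<ge> 0" if "V \<in> lift_set C" for V
  proof -
    have VC: "vf V \<in> C" using that unfolding lift_set_def by simp
    have "inner (V - mkv z) (block_op m G (mkv z)) = (\<Sum>i\<in>{1..m}. inner (vf V i - z i) (G i z))"
      using inner_block_op[OF block_supported_lift_diff[of V m H "mkv z"], of G "mkv z"]
        C_sub VC zC vz unfolding lift_set_def by (auto simp: minus_fsv.rep_eq)
    also have "\<dots> = - dinner m (\<lambda>i. vf V i - z i) (\<lambda>i. if i \<in> {1..m} then - G i z else 0)"
      unfolding dinner_def by (simp add: sum_negf[symmetric])
    finally show ?thesis using z VC zC unfolding normal_cone_def by auto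
  qed
  then show ?thesis unfolding vi_solutions_def lift_set_def using vz zC by simp
qed

text \<open>Errors: a truncated error sequence with absolutely summable coordinates is absolutely
  summable as a sequence of vectors, since the norm is at most the sum of the coordinate norms.\<close>

lemma norm_truncate_le:
  "norm (mkv (truncate m f)) \<le> (\<Sum>i\<in>{1..m}. norm (f i :: 'a::real_inner))"
proof -
  have v: "vf (mkv (truncate m f)) = truncate m f" by (rule vf_mkv_block[OF block_supported_truncate])
  have "(norm (mkv (truncate m f)))\<^sup>2 = (\<Sum>i\<in>{1..m}. (norm (f i))\<^sup>2)"
    using norm_block[of m "mkv (truncate m f)"] unfolding v by (simp add: dnorm2_def truncate_def)
  then have "norm (mkv (truncate m f)) = L2_set (\<lambda>i. norm (f i)) {1..m}"
    unfolding L2_set_def by (simp add: real_sqrt_unique)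
  then show ?thesis using L2_set_le_sum[of "{1..m}" "\<lambda>i. norm (f i)"] by simp
qed

lemma summable_truncate:
  assumes "\<And>i. i \<in> {1..m} \<Longrightarrow> summable (\<lambda>n. norm (e n i :: 'a::real_inner))"
  shows "summable (\<lambda>n. norm (mkv (truncate m (e n))))"
proof (rule summable_comparison_test)
  show "\<exists>N. \<forall>n\<ge>N. norm (norm (mkv (truncate m (e n)))) \<le> (\<Sum>i\<in>{1..m}. norm (e n i))"
    using norm_truncate_le by auto
  show "summable (\<lambda>n. \<Sum>i\<in>{1..m}. norm (e n i))" using assms by (rule summable_sum)
qed

lemma block_line_derivative:
  fixes H :: "nat \<Rightarrow> ('a::real_inner) set"
    and g :: "nat \<Rightarrow> (nat \<Rightarrow> 'a) \<Rightarrow> real" and G :: "nat \<Rightarrow> (nat \<Rightarrow> 'a) \<Rightarrow> 'a"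
  assumes grad: "\<And>w i. w \<in> dsum m H \<Longrightarrow> i \<in> {1..m} \<Longrightarrow>
                 ((\<lambda>t. g i (w(i := t))) has_derivative (\<lambda>h. inner (G i w) h)) (at (w i) within H i)"
    and xb: "xb \<in> dsum m H" and i: "i \<in> {1..m}" and Hs: "subspace (H i)" and d: "d \<in> H i"
  shows "((\<lambda>\<tau>. g i (xb(i := xb i + \<tau> *\<^sub>R d))) has_real_derivative
           inner (G i (xb(i := xb i + \<tau> *\<^sub>R d))) d) (at \<tau>)"
proof -
  define f where "f \<tau> = xb i + \<tau> *\<^sub>R d" for \<tau> :: real
  have fH: "f \<tau> \<in> H i" for \<tau>
    using Hs xb i d unfolding f_def dsum_def by (simp add: subspace_add subspace_scale)
  have wD: "xb(i := f \<tau>) \<in> dsum m H" using xb fH i unfolding dsum_def by auto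
  have "((\<lambda>s. g i (xb(i := s))) has_derivative (\<lambda>h. inner (G i (xb(i := f \<tau>))) h))
      (at (f \<tau>) within range f)"
    using has_derivative_subset[OF grad[OF wD i], of "range f"] fH by auto
  moreover have "(f has_derivative (\<lambda>h. h *\<^sub>R d)) (at \<tau>)"
    unfolding f_def by (auto intro!: derivative_eq_intros)
  ultimately have "((\<lambda>\<tau>. g i (xb(i := f \<tau>))) has_derivative
      (\<lambda>h. inner (G i (xb(i := f \<tau>))) (h *\<^sub>R d))) (at \<tau>)"
    using has_derivative_in_compose by fastforce
  moreover have "(\<lambda>h. inner (G i (xb(i := f \<tau>))) (h *\<^sub>R d)) = (*) (inner (G i (xb(i := f \<tau>))) d)"
    by (auto simp: mult.commute)
  ultimately show ?thesis unfolding has_field_derivative_def f_def by simp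
qed

text \<open>Monotonicity of the pseudo-gradient, restricted to block i with all other blocks fixed,
  makes this derivative nondecreasing along the segment from xb i to t; if it is nonnegative
  at xb i (the partial variational inequality), the cost does not decrease towards t.\<close>

lemma partial_vi_minimizes:
  fixes H :: "nat \<Rightarrow> ('a::{real_inner,complete_space}) set"
    and g :: "nat \<Rightarrow> (nat \<Rightarrow> 'a) \<Rightarrow> real" and G :: "nat \<Rightarrow> (nat \<Rightarrow> 'a) \<Rightarrow> 'a"
  assumes H: "hilbert_family m H"
    and grad: "\<And>w i. w \<in> dsum m H \<Longrightarrow> i \<in> {1..m} \<Longrightarrow>
                 ((\<lambda>t. g i (w(i := t))) has_derivative (\<lambda>h. inner (G i w) h)) (at (w i) within H i)"
    and mono: "\<And>u v. u \<in> dsum m H \<Longrightarrow> v \<in> dsum m H \<Longrightarrow>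
                 (\<Sum>i\<in>{1..m}. inner (G i u - G i v) (u i - v i)) \<ge> 0"
    and xb: "xb \<in> dsum m H" and i: "i \<in> {1..m}" and t: "t \<in> H i"
    and vi: "inner (t - xb i) (G i xb) \<ge> 0"
  shows "g i xb \<le> g i (xb(i := t))"
proof -
  have Hs: "subspace (H i)" using H i unfolding hilbert_family_def by auto
  have xbi: "xb i \<in> H i" using xb i unfolding dsum_def by auto
  define d where "d = t - xb i"
  have dH: "d \<in> H i" unfolding d_def using Hs t xbi by (rule subspace_diff)
  define w where "w \<tau> = xb(i := xb i + \<tau> *\<^sub>R d)" for \<tau> :: real
  have wD: "w \<tau> \<in> dsum m H" for \<tau>
    using xb xbi dH Hs i unfolding w_def dsum_def by (auto simp: subspace_add subspace_scale)
  have nonneg: "inner (G i (w \<tau>)) d \<ge> 0" if "\<tau> \<in> {0..1}" for \<tau>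
  proof (cases "\<tau> = 0")
    case True
    then have "w \<tau> = xb" unfolding w_def by auto
    then show ?thesis using vi unfolding d_def by (simp add: inner_commute)
  next
    case False
    then have tp: "\<tau> > 0" using that by auto
    have "0 \<le> (\<Sum>j\<in>{1..m}. inner (G j (w \<tau>) - G j xb) (w \<tau> j - xb j))" by (rule mono[OF wD xb])
    also have "\<dots> = (\<Sum>j\<in>{i}. inner (G j (w \<tau>) - G j xb) (w \<tau> j - xb j))"
      using i by (intro sum.mono_neutral_right) (auto simp: w_def)
    also have "\<dots> = \<tau> * (inner (G i (w \<tau>)) d - inner (G i xb) d)"
      unfolding w_def by (simp add: inner_diff_left)
    finally have "inner (G i xb) d \<le> inner (G i (w \<tau>)) d" using tp by (simp add: zero_le_mult_iff)
    moreover have "inner (G i xb) d \<ge> 0" using vi unfolding d_def by (simp add: inner_commute)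
    ultimately show ?thesis by linarith
  qed
  define \<psi> where "\<psi> \<tau> = g i (w \<tau>)" for \<tau>
  have der: "(\<psi> has_real_derivative inner (G i (w \<tau>)) d) (at \<tau>)" for \<tau>
    unfolding \<psi>_def w_def by (rule block_line_derivative[OF grad xb i Hs dH])
  have "\<psi> 0 \<le> \<psi> 1"
    by (rule deriv_nonneg_imp_mono[where a = 0 and b = 1 and g' = "\<lambda>\<tau>. inner (G i (w \<tau>)) d"])
      (use der nonneg in auto)
  then show ?thesis unfolding \<psi>_def w_def d_def by simp
qed

text \<open>A solution of the lifted variational inequality is a generalised Nash equilibrium:
  testing the inequality with the point that differs from it only in block i gives the
  partial variational inequality of player i.\<close>

lemma vi_solution_is_equilibrium:
  fixes H :: "nat \<Rightarrow> ('a::{real_inner,complete_space}) set"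
  assumes H: "hilbert_family m H" and C_sub: "C \<subseteq> dsum m H"
    and grad: "\<And>w i. w \<in> dsum m H \<Longrightarrow> i \<in> {1..m} \<Longrightarrow>
                 ((\<lambda>t. g i (w(i := t))) has_derivative (\<lambda>h. inner (G i w) h)) (at (w i) within H i)"
    and mono: "\<And>u v. u \<in> dsum m H \<Longrightarrow> v \<in> dsum m H \<Longrightarrow>
                 (\<Sum>i\<in>{1..m}. inner (G i u - G i v) (u i - v i)) \<ge> 0"
    and sol: "X \<in> vi_solutions (lift_set C) (block_op m G)" and i: "i \<in> {1..m}"
  shows "vf X i \<in> Argmin (\<lambda>t. g i ((vf X)(i := t))) (Qset i H C (vf X))"
proof -
  let ?xb = "vf X"
  have xbC: "?xb \<in> C" using sol unfolding vi_solutions_def lift_set_def by simp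
  have "g i ?xb \<le> g i (?xb(i := t))" if t: "t \<in> Qset i H C ?xb" for t
  proof (rule partial_vi_minimizes[OF H grad mono subsetD[OF C_sub xbC] i])
    show "t \<in> H i" using t unfolding Qset_def by simp
    have tC: "?xb(i := t) \<in> C" using t unfolding Qset_def by simp
    have vt: "vf (mkv (?xb(i := t))) = ?xb(i := t)"
      using vf_mkv_block[OF block_supported_dsum] C_sub tC by blast
    have lifted: "mkv (?xb(i := t)) \<in> lift_set (dsum m H)" "X \<in> lift_set (dsum m H)"
      using vt tC xbC C_sub unfolding lift_set_def by auto
    have "0 \<le> inner (mkv (?xb(i := t)) - X) (block_op m G X)"
      using sol vt tC unfolding vi_solutions_def lift_set_def by simp
    also have "\<dots> = (\<Sum>j\<in>{1..m}. inner ((?xb(i := t)) j - ?xb j) (G j ?xb))"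
      using inner_block_op[OF block_supported_lift_diff[OF lifted]] vt by (simp add: minus_fsv.rep_eq)
    also have "\<dots> = (\<Sum>j\<in>{i}. inner ((?xb(i := t)) j - ?xb j) (G j ?xb))"
      using i by (intro sum.mono_neutral_right) auto
    finally show "0 \<le> inner (t - ?xb i) (G i ?xb)" by simp
  qed
  moreover have "?xb i \<in> Qset i H C ?xb" using C_sub xbC i unfolding Qset_def dsum_def by auto
  ultimately show ?thesis unfolding Argmin_def by auto
qed

locale gnep_fbf =
  fixes m :: nat
    and H :: "nat \<Rightarrow> ('a::{real_inner,complete_space}) set"
    and C :: "(nat \<Rightarrow> 'a) set"
    and g :: "nat \<Rightarrow> (nat \<Rightarrow> 'a) \<Rightarrow> real"
    and G :: "nat \<Rightarrow> (nat \<Rightarrow> 'a) \<Rightarrow> 'a"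
    and z :: "nat \<Rightarrow> 'a"
    and \<kappa> \<epsilon> :: real
    and \<gamma> :: "nat \<Rightarrow> real"
    and x y p q a b c :: "nat \<Rightarrow> nat \<Rightarrow> 'a"
  assumes H: "hilbert_family m H"
    and C_sub: "C \<subseteq> dsum m H" and C_ne: "C \<noteq> {}"
    and C_closed: "dclosed m H C" and C_convex: "dconvex C"
    and grad: "\<And>w i. w \<in> dsum m H \<Longrightarrow> i \<in> {1..m} \<Longrightarrow>
                 G i w \<in> H i \<and>
                 ((\<lambda>t. g i (w(i := t))) has_derivative (\<lambda>h. inner (G i w) h)) (at (w i) within H i)"
    and mono: "\<And>u v. u \<in> dsum m H \<Longrightarrow> v \<in> dsum m H \<Longrightarrow>
                 (\<Sum>i\<in>{1..m}. inner (G i u - G i v) (u i - v i)) \<ge> 0"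
    and z: "(\<lambda>i. if i \<in> {1..m} then - G i z else 0) \<in> normal_cone m C z"
    and chi: "\<kappa> > 0"
    and lip: "\<And>u v. u \<in> dsum m H \<Longrightarrow> v \<in> dsum m H \<Longrightarrow>
                 (\<Sum>i\<in>{1..m}. (norm (G i u - G i v))\<^sup>2) \<le> \<kappa>\<^sup>2 * (\<Sum>i\<in>{1..m}. (norm (u i - v i))\<^sup>2)"
    and eps: "0 < \<epsilon>" "\<epsilon> < 1 / (\<kappa> + 1)"
    and gamma: "\<And>n. \<epsilon> \<le> \<gamma> n \<and> \<gamma> n \<le> (1 - \<epsilon>) / \<kappa>"
    and x0: "x 0 \<in> dsum m H"
    and abc: "\<And>n i. i \<in> {1..m} \<Longrightarrow> a n i \<in> H i \<and> b n i \<in> H i \<and> c n i \<in> H i"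
    and abc_sum: "\<And>i. i \<in> {1..m} \<Longrightarrow> summable (\<lambda>n. norm (a n i)) \<and>
                    summable (\<lambda>n. norm (b n i)) \<and> summable (\<lambda>n. norm (c n i))"
    and y_def: "\<And>n i. y n i = (if i \<in> {1..m} then x n i - \<gamma> n *\<^sub>R (G i (x n) + a n i) else 0)"
    and p_def: "\<And>n i. p n i = (if i \<in> {1..m} then dproj m C (y n) i + b n i else 0)"
    and q_def: "\<And>n i. q n i = (if i \<in> {1..m} then p n i - \<gamma> n *\<^sub>R (G i (p n) + c n i) else 0)"
    and x_def: "\<And>n i. x (Suc n) i = (if i \<in> {1..m} then x n i - y n i + q n i else 0)"
begin

lemma block_supported_iterates:
  "block_supported m (x n)" "block_supported m (y n)" "block_supported m (p n)" "block_supported m (q n)"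
proof -
  show "block_supported m (x n)"
    using block_supported_dsum[OF x0] x_def by (cases n) (auto simp: block_supported_def)
qed (auto simp: block_supported_def y_def p_def q_def)

lemma vf_mkv_iterates:
  "vf (mkv (x n)) = x n" "vf (mkv (y n)) = y n" "vf (mkv (p n)) = p n" "vf (mkv (q n)) = q n"
  using vf_mkv_block block_supported_iterates by blast+

lemma proj_op_iterate: "vf (proj_op m C (mkv (y n))) = dproj m C (y n)"
  and dproj_iterate_supported: "block_supported m (dproj m C (y n))"
proof -
  have "block_supported m (vf (mkv (y n)))" using vf_mkv_iterates block_supported_iterates by simp
  from proj_op_nearest[OF H C_sub C_ne C_closed C_convex this]
  show "vf (proj_op m C (mkv (y n))) = dproj m C (y n)"
    and "block_supported m (dproj m C (y n))"
    using C_sub vf_mkv_iterates unfolding lift_set_def by (auto intro: block_supported_dsum)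
qed

lemma lifted_recursion:
  "mkv (y n) = mkv (x n) - \<gamma> n *\<^sub>R (block_op m G (mkv (x n)) + mkv (truncate m (a n)))"
  "mkv (p n) = proj_op m C (mkv (y n)) + mkv (truncate m (b n))"
  "mkv (q n) = mkv (p n) - \<gamma> n *\<^sub>R (block_op m G (mkv (p n)) + mkv (truncate m (c n)))"
  "mkv (x (Suc n)) = mkv (x n) - mkv (y n) + mkv (q n)"
  using block_supported_iterates dproj_iterate_supported
  by (auto intro!: vf_inject[THEN iffD1] simp: fun_eq_iff vf_mkv_iterates vf_block_op proj_op_iterate
      minus_fsv.rep_eq plus_fsv.rep_eq scaleR_fsv.rep_eq vf_mkv_block[OF block_supported_truncate]
      truncate_def block_supported_def y_def p_def q_def x_def)

sublocale lifted: fbf_iteration "lift_set (dsum m H)" "lift_set C" "proj_op m C" "block_op m G"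
  \<kappa> \<epsilon> \<gamma> "mkv z" "\<lambda>n. mkv (x n)" "\<lambda>n. mkv (y n)" "\<lambda>n. mkv (p n)" "\<lambda>n. mkv (q n)"
  "\<lambda>n. mkv (truncate m (a n))" "\<lambda>n. mkv (truncate m (b n))" "\<lambda>n. mkv (truncate m (c n))"
proof unfold_locales
  have supported: "block_supported m (vf U)" if "U \<in> lift_set (dsum m H)" for U
    using that block_supported_dsum unfolding lift_set_def by blast
  note proj = proj_op_nearest[OF H C_sub C_ne C_closed C_convex supported]
  show "subspace (lift_set (dsum m H))" by (rule lift_dsum_subspace[OF H])
  show "complete (lift_set (dsum m H))" by (rule lift_dsum_complete[OF H])
  show "lift_set C \<subseteq> lift_set (dsum m H)" using C_sub unfolding lift_set_def by auto
  show "convex (lift_set C)" by (rule lift_set_convex[OF C_convex])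
  show "complete (lift_set C)" by (rule lift_set_complete[OF H C_sub C_closed])
  show "proj_op m C U \<in> lift_set C" if "U \<in> lift_set (dsum m H)" for U using proj(1)[OF that] .
  show "inner (V - proj_op m C U) (U - proj_op m C U) \<le> 0"
    if "U \<in> lift_set (dsum m H)" "V \<in> lift_set C" for U V
    using any_closest_point_dot[OF lift_set_convex[OF C_convex]
        complete_imp_closed[OF lift_set_complete[OF H C_sub C_closed]] proj(1)[OF that(1)] that(2)]
      proj(3)[OF that(1)] by (simp add: inner_commute)
  show "block_op m G U \<in> lift_set (dsum m H)" if "U \<in> lift_set (dsum m H)" for U
    using block_op_in_dsum grad that by blast
  show "inner (block_op m G U - block_op m G V) (U - V) \<ge> 0"
    if "U \<in> lift_set (dsum m H)" "V \<in> lift_set (dsum m H)" for U V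
    by (rule block_op_monotone[of m H G, OF mono that])
  show "norm (block_op m G U - block_op m G V) \<le> \<kappa> * norm (U - V)"
    if "U \<in> lift_set (dsum m H)" "V \<in> lift_set (dsum m H)" for U V
    by (rule block_op_lipschitz[of m H G \<kappa>, OF lip less_imp_le[OF chi] that])
  show "mkv z \<in> vi_solutions (lift_set C) (block_op m G)"
    by (rule normal_cone_solution[where G = G and z = z, OF C_sub z])
  show "mkv (x 0) \<in> lift_set (dsum m H)" using x0 vf_mkv_iterates unfolding lift_set_def by simp
  show "mkv (truncate m (a n)) \<in> lift_set (dsum m H) \<and> mkv (truncate m (b n)) \<in> lift_set (dsum m H)
      \<and> mkv (truncate m (c n)) \<in> lift_set (dsum m H)" for n
    using abc unfolding lift_set_def
    by (simp add: vf_mkv_block[OF block_supported_truncate] dsum_def truncate_def)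
  show "summable (\<lambda>n. norm (mkv (truncate m (a n))))" "summable (\<lambda>n. norm (mkv (truncate m (b n))))"
    "summable (\<lambda>n. norm (mkv (truncate m (c n))))"
    using abc_sum by (auto intro: summable_truncate)
qed (use chi eps gamma lifted_recursion in auto)

theorem equilibrium_and_weak_convergence:
  "\<exists>xb \<in> dsum m H.
     (\<forall>i\<in>{1..m}. xb i \<in> Argmin (\<lambda>t. g i (xb(i := t))) (Qset i H C xb)) \<and>
     (\<forall>i\<in>{1..m}. weakly_converges (\<lambda>n. x n i) (xb i) \<and> weakly_converges (\<lambda>n. p n i) (xb i))"
proof -
  obtain X where X: "X \<in> vi_solutions (lift_set C) (block_op m G)"
    "weakly_converges (\<lambda>n. mkv (x n)) X" "weakly_converges (\<lambda>n. mkv (p n)) X"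
    using lifted.weak_convergence by blast
  have "vf X \<in> dsum m H" using X(1) C_sub unfolding vi_solutions_def lift_set_def by auto
  moreover have "vf X i \<in> Argmin (\<lambda>t. g i ((vf X)(i := t))) (Qset i H C (vf X))" if "i \<in> {1..m}" for i
    using vi_solution_is_equilibrium[OF H C_sub _ mono X(1) that] grad by blast
  moreover have "weakly_converges (\<lambda>n. x n i) (vf X i)" "weakly_converges (\<lambda>n. p n i) (vf X i)" for i
    using weakly_converges_coordinate[OF X(2), of i] weakly_converges_coordinate[OF X(3), of i]
    by (simp_all add: vf_mkv_iterates)
  ultimately show ?thesis by blast
qed

end

text \<open>The theorem is the conclusion of the locale, which captures its hypotheses.\<close>

theorem proposition4p5:
  fixes m :: nat
    and H :: "nat \<Rightarrow> ('a::{real_inner,complete_space}) set"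
    and C :: "(nat \<Rightarrow> 'a) set"
    and g :: "nat \<Rightarrow> (nat \<Rightarrow> 'a) \<Rightarrow> real"
    and G :: "nat \<Rightarrow> (nat \<Rightarrow> 'a) \<Rightarrow> 'a"
    and z :: "nat \<Rightarrow> 'a"
    and \<kappa> \<epsilon> :: real
    and \<gamma> :: "nat \<Rightarrow> real"
    and x y p q a b c :: "nat \<Rightarrow> nat \<Rightarrow> 'a"
  assumes m: "m \<ge> 2"
    and H: "hilbert_family m H"
    and C_sub: "C \<subseteq> dsum m H" and C_ne: "C \<noteq> {}"
    and C_closed: "dclosed m H C" and C_convex: "dconvex C"
    and grad: "\<And>w i. w \<in> dsum m H \<Longrightarrow> i \<in> {1..m} \<Longrightarrow>
                 G i w \<in> H i \<and>
                 ((\<lambda>t. g i (w(i := t))) has_derivative (\<lambda>h. inner (G i w) h)) (at (w i) within H i)"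
    and mono: "\<And>u v. u \<in> dsum m H \<Longrightarrow> v \<in> dsum m H \<Longrightarrow>
                 (\<Sum>i\<in>{1..m}. inner (G i u - G i v) (u i - v i)) \<ge> 0"
    and z: "z \<in> dsum m H" "(\<lambda>i. if i \<in> {1..m} then - G i z else 0) \<in> normal_cone m C z"
    and chi: "\<kappa> > 0"
    and lip: "\<And>u v. u \<in> dsum m H \<Longrightarrow> v \<in> dsum m H \<Longrightarrow>
                 (\<Sum>i\<in>{1..m}. (norm (G i u - G i v))\<^sup>2) \<le> \<kappa>\<^sup>2 * (\<Sum>i\<in>{1..m}. (norm (u i - v i))\<^sup>2)"
    and eps: "0 < \<epsilon>" "\<epsilon> < 1 / (\<kappa> + 1)"
    and gamma: "\<And>n. \<epsilon> \<le> \<gamma> n \<and> \<gamma> n \<le> (1 - \<epsilon>) / \<kappa>"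
    and x0: "x 0 \<in> dsum m H"
    and abc: "\<And>n i. i \<in> {1..m} \<Longrightarrow> a n i \<in> H i \<and> b n i \<in> H i \<and> c n i \<in> H i"
    and abc_sum: "\<And>i. i \<in> {1..m} \<Longrightarrow> summable (\<lambda>n. norm (a n i)) \<and>
                    summable (\<lambda>n. norm (b n i)) \<and> summable (\<lambda>n. norm (c n i))"
    and y_def: "\<And>n i. y n i = (if i \<in> {1..m} then x n i - \<gamma> n *\<^sub>R (G i (x n) + a n i) else 0)"
    and p_def: "\<And>n i. p n i = (if i \<in> {1..m} then dproj m C (y n) i + b n i else 0)"
    and q_def: "\<And>n i. q n i = (if i \<in> {1..m} then p n i - \<gamma> n *\<^sub>R (G i (p n) + c n i) else 0)"
    and x_def: "\<And>n i. x (Suc n) i = (if i \<in> {1..m} then x n i - y n i + q n i else 0)"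
  shows "\<exists>xb \<in> dsum m H.
           (\<forall>i\<in>{1..m}. xb i \<in> Argmin (\<lambda>t. g i (xb(i := t))) (Qset i H C xb)) \<and>
           (\<forall>i\<in>{1..m}. weakly_converges (\<lambda>n. x n i) (xb i) \<and>
                        weakly_converges (\<lambda>n. p n i) (xb i))"
proof -
  interpret gnep_fbf m H C g G z \<kappa> \<epsilon> \<gamma> x y p q a b c
    using H C_sub C_ne C_closed C_convex grad mono z(2) chi lip eps gamma x0 abc abc_sum
      y_def p_def q_def x_def
    by unfold_locales blast+
  show ?thesis by (rule equilibrium_and_weak_convergence)
qed

end
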